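(* Let $G$ be a discrete group and $(T_t)_{t\geq0}$ a Markovian semigroup of Fourier multipliers on the group von Neumann algebra $\mathrm{VN}(G)$, $T_t(\lambda_s)=e^{-t\psi(s)}\lambda_s$, where $\psi\colon G\to\mathbb{R}$ is conditionally negative definite with $\psi(e)=0$, and let $H$ be a real Hilbert space, $\pi\colon G\to\mathrm{O}(H)$ a homomorphism and $b_\psi\colon G\to H$ a map with $b_\psi(st)=b_\psi(s)+\pi_s(b_\psi(t))$ for all $s,t\in G$ and $\psi(s)=\|b_\psi(s)\|_H^2$ for all $s\in G$. Assume that $H$ is finite-dimensional of dimension $d$, that the set $\{s\in G:\psi(s)=0\}$ is finite, and that $\inf\{\|b_\psi(s)-b_\psi(t)\|_H^2: s,t\in G,\ b_\psi(s)\neq b_\psi(t)\}>0$. Then there is $C>0$ with $$\|T_t\|_{\mathrm{cb},\mathrm{L}^1(\mathrm{VN}(G))\to\mathrm{L}^\infty(\mathrm{VN}(G))}\leq \frac{C}{t^{d/2}},\quad 0<t\leq1.$$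
   Context: $\mathrm{VN}(G)$ is equipped with its canonical normalized trace $\tau(x)=\langle\delta_e,x\delta_e\rangle$; $\lambda_s$ are the left translation operators. $\mathrm{L}^1(\mathrm{VN}(G))$ carries its operator space structure as predual of $\mathrm{VN}(G)^{\mathrm{op}}$. *)

theory Defs
  imports "HOL-Analysis.Analysis"
begin

definition l2 :: "('a \<Rightarrow> complex) set" where
  "l2 = {f. (\<lambda>x. (cmod (f x))^2) summable_on UNIV}"

definition l2_norm :: "('a \<Rightarrow> complex) \<Rightarrow> real" where
  "l2_norm f = sqrt (infsum (\<lambda>x. (cmod (f x))^2) UNIV)"

type_synonym 'a op = "('a \<Rightarrow> complex) \<Rightarrow> ('a \<Rightarrow> complex)"

definition bounded_op :: "'a op \<Rightarrow> bool" where
  "bounded_op A \<longleftrightarrow>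
     (\<forall>f\<in>l2. A f \<in> l2) \<and>
     (\<forall>f\<in>l2. \<forall>g\<in>l2. A (\<lambda>x. f x + g x) = (\<lambda>x. A f x + A g x)) \<and>
     (\<forall>f\<in>l2. \<forall>c. A (\<lambda>x. c * f x) = (\<lambda>x. c * A f x)) \<and>
     (\<exists>K. \<forall>f\<in>l2. l2_norm (A f) \<le> K * l2_norm f)"

definition op_norm :: "'a op \<Rightarrow> real" where
  "op_norm A = Sup ((\<lambda>f. l2_norm (A f)) ` {f \<in> l2. l2_norm f \<le> 1})"

definition commutant :: "'a op set \<Rightarrow> 'a op set" where
  "commutant S = {B. bounded_op B \<and> (\<forall>A\<in>S. \<forall>f\<in>l2. A (B f) = B (A f))}"

text \<open>Discrete group G = the type 'g (class group_add, written additively: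
  e = 0, st = s + t, s^-1 = -s). Left translation lambda_s on l2(G):
  (lambda_s f)(x) = f(s^-1 x).\<close>
definition lam :: "'g::group_add \<Rightarrow> 'g op" where
  "lam s = (\<lambda>f x. f (- s + x))"

definition VN :: "('g::group_add) op set" where
  "VN = commutant (commutant (range lam))"

definition delta_e :: "'g::group_add \<Rightarrow> complex" where
  "delta_e = (\<lambda>x. if x = 0 then 1 else 0)"

text \<open>Canonical trace tau(x) = <delta_e, x delta_e>.\<close>
definition tau :: "('g::group_add) op \<Rightarrow> complex" where
  "tau x = x delta_e 0"

text \<open>Fourier multiplier T_t: the element of VN(G) with Fourier coefficients
  tau(lambda_s^* T_t x) = (T_t x delta_e)(s) = e^(-t psi(s)) tau(lambda_s^* x);
  equivalently the normal extension of T_t(lambda_s) = e^(-t psi s) lambda_s.\<close>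
definition fourier_mult :: "('g::group_add \<Rightarrow> real) \<Rightarrow> real \<Rightarrow> 'g op \<Rightarrow> 'g op" where
  "fourier_mult psi t x =
     (SOME y. y \<in> VN \<and> (\<forall>s. y delta_e s = complex_of_real (exp (- t * psi s)) * x delta_e s))"

text \<open>Matrix amplification: an n x n matrix of operators on l2(G) acts on l2(G x {..<n}).\<close>
definition amp :: "nat \<Rightarrow> (nat \<Rightarrow> nat \<Rightarrow> 'a op) \<Rightarrow> ('a \<times> nat) op" where
  "amp n X F = (\<lambda>(g, i). if i < n then (\<Sum>j<n. X i j (\<lambda>h. F (h, j)) g) else 0)"

text \<open>Norm on M_n(VN(G)) (= M_n(L^infty(VN(G)))).\<close>
definition mat_norm :: "nat \<Rightarrow> (nat \<Rightarrow> nat \<Rightarrow> 'a op) \<Rightarrow> real" where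
  "mat_norm n X = op_norm (amp n X)"

definition smat_norm :: "nat \<Rightarrow> (nat \<Rightarrow> nat \<Rightarrow> complex) \<Rightarrow> real" where
  "smat_norm k a = op_norm (\<lambda>F::nat \<Rightarrow> complex. \<lambda>i. if i < k then (\<Sum>j<k. a i j * F j) else 0)"

text \<open>Norm of M_n(L^1(VN(G))) on the dense subspace M_n(VN(G)), where x in VN(G)
  is identified with the normal functional y \<mapsto> tau(x y) on VN(G)^op:
  ||[x_ij]|| = cb-norm of y \<mapsto> [tau(x_ij y)] from VN(G)^op to M_n, i.e. the sup over m
  and [y_kl] in the unit ball of M_m(VN(G)^op) (whose norm is that of the transpose
  [y_lk] in M_m(VN(G))) of the norm of [tau(x_ij y_kl)] in M_m(M_n) = M_(mn)
  (row index k*n+i, column index l*n+j).\<close>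
definition L1_mat_norm :: "nat \<Rightarrow> (nat \<Rightarrow> nat \<Rightarrow> ('g::group_add) op) \<Rightarrow> real" where
  "L1_mat_norm n X = Sup {smat_norm (m * n)
        (\<lambda>r c. tau (X (r mod n) (c mod n) \<circ> Y (r div n) (c div n))) | m Y.
        (\<forall>k<m. \<forall>l<m. Y k l \<in> VN) \<and> mat_norm m (\<lambda>k l. Y l k) \<le> 1}"

definition cond_neg_def :: "('g::group_add \<Rightarrow> real) \<Rightarrow> bool" where
  "cond_neg_def psi \<longleftrightarrow> (\<forall>s. psi (- s) = psi s) \<and>
     (\<forall>(n::nat) (a::nat \<Rightarrow> real) (s::nat \<Rightarrow> 'g). (\<Sum>i<n. a i) = 0 \<longrightarrow>
        (\<Sum>i<n. \<Sum>j<n. a i * a j * psi (- s i + s j)) \<le> 0)"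

definition orth_on :: "'h::real_inner set \<Rightarrow> ('h \<Rightarrow> 'h) \<Rightarrow> bool" where
  "orth_on H u \<longleftrightarrow> linear u \<and> bij_betw u H H \<and> (\<forall>x\<in>H. norm (u x) = norm x)"

end

theory Submission
  imports Defs
begin

(* The semigroup acts on symbols: for x in VN(G), T_t x is the convolution operator with symbol
   e^(-t psi) (x delta_e).  Hence the entries of T_t[x_ij] have symbols e^(-t psi(s)) A(s) with
   A(s) = [x_ij(s)], and pairing a row with itself shows
     ||T_t[x_ij]||_(M_n(VN(G))) <= (sum_s e^(-t psi(s))) * sup_s ||A(s)||_(M_n).
   Testing [x_ij] in M_n(L^1) against lambda_(-s) shows ||A(s)||_(M_n) <= ||[x_ij]||_(M_n(L^1)).
   It remains to bound sum_s e^(-t ||b(s)||^2).  By the cocycle identity the fibres of b are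
   translates of the finite set psi^(-1)(0), and by the gap condition distinct values of b lie
   in distinct cells of a fine grid in the d-dimensional space spanned by the range of b; so the
   ball of radius R contains O((1 + R)^d) points b(s), and summing over shells gives O(t^(-d/2)). *)

section \<open>Sums and square-summable functions\<close>

lemma nonneg_summable_on_finite_sums_le:
  fixes f :: "'a \<Rightarrow> real"
  assumes "\<And>x. x \<in> A \<Longrightarrow> f x \<ge> 0" and "\<And>F. finite F \<Longrightarrow> F \<subseteq> A \<Longrightarrow> sum f F \<le> B"
  shows "f summable_on A" and "infsum f A \<le> B"
proof -
  have "bdd_above (sum f ` {F. F \<subseteq> A \<and> finite F})"
    using assms(2) by (auto intro!: bdd_aboveI[where M=B])
  then show sf: "f summable_on A" using nonneg_bdd_above_summable_on assms(1) by blast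
  show "infsum f A \<le> B" using infsum_le_finite_sums[OF sf] assms(2) by blast
qed

lemma has_sum_sum:
  fixes h :: "'b \<Rightarrow> 'a \<Rightarrow> 'c::topological_comm_monoid_add"
  assumes "finite I" and "\<And>i. i \<in> I \<Longrightarrow> (h i has_sum S i) A"
  shows "((\<lambda>x. \<Sum>i\<in>I. h i x) has_sum (\<Sum>i\<in>I. S i)) A"
  using assms by (induction I rule: finite_induct) (auto intro: has_sum_add)

lemma has_sum_diff:
  fixes f g :: "'a \<Rightarrow> 'b::topological_ab_group_add"
  shows "(f has_sum a) A \<Longrightarrow> (g has_sum b) A \<Longrightarrow> ((\<lambda>x. f x - g x) has_sum (a - b)) A"
  using has_sum_add[of f A a "\<lambda>x. - g x" "- b"] has_sum_uminus[of g A "- b"] by simp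

lemma summable_on_sum_infsum_sum:
  fixes h :: "'b \<Rightarrow> 'a \<Rightarrow> 'c::{topological_comm_monoid_add, t2_space}"
  assumes "finite I" and "\<And>i. i \<in> I \<Longrightarrow> h i summable_on A"
  shows "(\<lambda>x. \<Sum>i\<in>I. h i x) summable_on A"
    and "infsum (\<lambda>x. \<Sum>i\<in>I. h i x) A = (\<Sum>i\<in>I. infsum (h i) A)"
  using has_sum_sum[OF assms(1), where S="\<lambda>i. infsum (h i) A"] assms(2)
  by (auto simp: has_sum_iff)

lemma sum_mult_le_sqrt:
  fixes p q :: "'a \<Rightarrow> real"
  assumes "\<And>i. p i \<ge> 0" and "\<And>i. q i \<ge> 0"
  shows "(\<Sum>i\<in>I. p i * q i) \<le> sqrt (\<Sum>i\<in>I. (p i)\<^sup>2) * sqrt (\<Sum>i\<in>I. (q i)\<^sup>2)"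
proof -
  have "sqrt ((\<Sum>i\<in>I. p i * q i)\<^sup>2) \<le> sqrt ((\<Sum>i\<in>I. (p i)\<^sup>2) * (\<Sum>i\<in>I. (q i)\<^sup>2))"
    by (rule real_sqrt_le_mono[OF Cauchy_Schwarz_ineq_sum])
  moreover have "(\<Sum>i\<in>I. p i * q i) \<ge> 0" using assms by (intro sum_nonneg) auto
  ultimately show ?thesis by (simp add: real_sqrt_mult)
qed

lemma power2_cmod_sum_le: "(cmod (\<Sum>j<m. a j))\<^sup>2 \<le> real m * (\<Sum>j<m. (cmod (a j))\<^sup>2)"
proof -
  have "(cmod (\<Sum>j<m. a j))\<^sup>2 \<le> (\<Sum>j<m. cmod (a j))\<^sup>2" by (simp add: power_mono norm_sum)
  also have "\<dots> \<le> real m * (\<Sum>j<m. (cmod (a j))\<^sup>2)"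
    using Cauchy_Schwarz_ineq_sum[of "\<lambda>_. 1" "\<lambda>j. cmod (a j)" "{..<m}"] by simp
  finally show ?thesis .
qed

lemma infsum_mult_le_sqrt:
  fixes p q :: "'a \<Rightarrow> real"
  assumes p: "\<And>x. p x \<ge> 0" and q: "\<And>x. q x \<ge> 0"
    and sp: "(\<lambda>x. (p x)\<^sup>2) summable_on A" and sq: "(\<lambda>x. (q x)\<^sup>2) summable_on A"
  shows "(\<lambda>x. p x * q x) summable_on A"
    and "infsum (\<lambda>x. p x * q x) A \<le> sqrt (infsum (\<lambda>x. (p x)\<^sup>2) A) * sqrt (infsum (\<lambda>x. (q x)\<^sup>2) A)"
proof -
  have "(\<Sum>x\<in>F. p x * q x) \<le> sqrt (infsum (\<lambda>x. (p x)\<^sup>2) A) * sqrt (infsum (\<lambda>x. (q x)\<^sup>2) A)"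
    if "finite F" "F \<subseteq> A" for F
  proof -
    have "(\<Sum>x\<in>F. p x * q x) \<le> sqrt (\<Sum>x\<in>F. (p x)\<^sup>2) * sqrt (\<Sum>x\<in>F. (q x)\<^sup>2)"
      by (rule sum_mult_le_sqrt[OF p q])
    also have "\<dots> \<le> sqrt (infsum (\<lambda>x. (p x)\<^sup>2) A) * sqrt (infsum (\<lambda>x. (q x)\<^sup>2) A)"
      using that by (intro mult_mono real_sqrt_le_mono finite_sum_le_infsum sp sq)
        (auto intro: infsum_nonneg sum_nonneg)
    finally show ?thesis .
  qed
  then show "(\<lambda>x. p x * q x) summable_on A"
    and "infsum (\<lambda>x. p x * q x) A \<le> sqrt (infsum (\<lambda>x. (p x)\<^sup>2) A) * sqrt (infsum (\<lambda>x. (q x)\<^sup>2) A)"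
    using nonneg_summable_on_finite_sums_le[of A "\<lambda>x. p x * q x"] p q by auto
qed

lemma power2_infsum_weighted_le:
  fixes w p :: "'a \<Rightarrow> real"
  assumes w: "\<And>x. w x \<ge> 0" and p: "\<And>x. p x \<ge> 0"
    and ws: "w summable_on A" and wp: "(\<lambda>x. w x * (p x)\<^sup>2) summable_on A"
  shows "(\<lambda>x. w x * p x) summable_on A"
    and "(infsum (\<lambda>x. w x * p x) A)\<^sup>2 \<le> infsum w A * infsum (\<lambda>x. w x * (p x)\<^sup>2) A"
proof -
  have sq: "sqrt (w x) * p x * sqrt (w x) = w x * p x"
    "(sqrt (w x) * p x)\<^sup>2 = w x * (p x)\<^sup>2" "(sqrt (w x))\<^sup>2 = w x" for x
    using w[of x] by (simp_all add: power_mult_distrib)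
  note cs = infsum_mult_le_sqrt[of "\<lambda>x. sqrt (w x) * p x" "\<lambda>x. sqrt (w x)" A]
  show "(\<lambda>x. w x * p x) summable_on A" using cs(1) w p ws wp by (simp add: sq)
  have "infsum (\<lambda>x. w x * p x) A \<le> sqrt (infsum (\<lambda>x. w x * (p x)\<^sup>2) A) * sqrt (infsum w A)"
    using cs(2) w p ws wp by (simp add: sq)
  moreover have "0 \<le> infsum (\<lambda>x. w x * p x) A" using w p by (auto intro!: infsum_nonneg)
  ultimately have "(infsum (\<lambda>x. w x * p x) A)\<^sup>2
      \<le> (sqrt (infsum (\<lambda>x. w x * (p x)\<^sup>2) A) * sqrt (infsum w A))\<^sup>2"
    by (rule power_mono)
  also have "\<dots> = infsum w A * infsum (\<lambda>x. w x * (p x)\<^sup>2) A"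
    using w p by (simp add: power_mult_distrib infsum_nonneg)
  finally show "(infsum (\<lambda>x. w x * p x) A)\<^sup>2 \<le> infsum w A * infsum (\<lambda>x. w x * (p x)\<^sup>2) A" .
qed

lemma cmod_has_sum_le:
  fixes f :: "'a \<Rightarrow> complex"
  assumes "(f has_sum a) A" and "b summable_on A" and "\<And>x. x \<in> A \<Longrightarrow> cmod (f x) \<le> b x"
  shows "cmod a \<le> infsum b A"
proof -
  have s: "(\<lambda>x. cmod (f x)) summable_on A"
    by (rule summable_on_comparison_test[OF assms(2)]) (use assms(3) in auto)
  have "cmod a \<le> infsum (\<lambda>x. cmod (f x)) A"
    by (rule norm_has_sum_bound[OF has_sum_infsum[OF s] assms(1)])
  also have "\<dots> \<le> infsum b A" by (rule infsum_mono[OF s assms(2)]) (use assms(3) in auto)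
  finally show ?thesis .
qed

definition l2_sqnorm :: "('a \<Rightarrow> complex) \<Rightarrow> real" where
  "l2_sqnorm f = infsum (\<lambda>x. (cmod (f x))\<^sup>2) UNIV"

lemma l2_norm_eq_sqrt: "l2_norm f = sqrt (l2_sqnorm f)"
  by (simp add: l2_norm_def l2_sqnorm_def)

lemma mem_l2_iff: "f \<in> l2 \<longleftrightarrow> (\<lambda>x. (cmod (f x))\<^sup>2) summable_on UNIV"
  by (simp add: l2_def)

lemma l2_sqnorm_nonneg: "l2_sqnorm f \<ge> 0"
  unfolding l2_sqnorm_def by (intro infsum_nonneg) auto

lemma l2_norm_nonneg: "l2_norm f \<ge> 0"
  by (simp add: l2_norm_eq_sqrt l2_sqnorm_nonneg)

lemma l2_norm_power2: "(l2_norm f)\<^sup>2 = l2_sqnorm f"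
  by (simp add: l2_norm_eq_sqrt l2_sqnorm_nonneg)

lemma l2_norm_le_iff: "B \<ge> 0 \<Longrightarrow> l2_norm f \<le> B \<longleftrightarrow> l2_sqnorm f \<le> B\<^sup>2"
  by (metis l2_norm_eq_sqrt real_sqrt_abs real_sqrt_le_iff abs_of_nonneg)

lemma sum_le_l2_sqnorm: "f \<in> l2 \<Longrightarrow> finite F \<Longrightarrow> (\<Sum>x\<in>F. (cmod (f x))\<^sup>2) \<le> l2_sqnorm f"
  unfolding l2_sqnorm_def mem_l2_iff by (intro finite_sum_le_infsum) auto

lemma sqrt_sum_le_l2_norm: "f \<in> l2 \<Longrightarrow> finite F \<Longrightarrow> sqrt (\<Sum>x\<in>F. (cmod (f x))\<^sup>2) \<le> l2_norm f"
  unfolding l2_norm_eq_sqrt by (intro real_sqrt_le_mono sum_le_l2_sqnorm)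

lemma norm_le_l2_norm: "f \<in> l2 \<Longrightarrow> cmod (f x) \<le> l2_norm f"
  using sqrt_sum_le_l2_norm[of f "{x}"] by simp

lemma l2_norm_eq_0_imp: "f \<in> l2 \<Longrightarrow> l2_norm f = 0 \<Longrightarrow> f = (\<lambda>x. 0)"
  using norm_le_l2_norm[of f] by fastforce

lemma l2_zero [simp]: "(\<lambda>x. 0) \<in> l2"
  by (simp add: mem_l2_iff)

lemma l2_norm_zero [simp]: "l2_norm (\<lambda>x. 0) = 0"
  by (simp add: l2_norm_def)

lemma l2_norm_scale: "l2_norm (\<lambda>x. c * f x) = cmod c * l2_norm f"
proof -
  have "(\<lambda>x. (cmod (c * f x))\<^sup>2) = (\<lambda>x. (cmod c)\<^sup>2 * (cmod (f x))\<^sup>2)"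
    by (simp add: norm_mult power_mult_distrib)
  then have "l2_sqnorm (\<lambda>x. c * f x) = (cmod c)\<^sup>2 * l2_sqnorm f"
    unfolding l2_sqnorm_def by (simp add: infsum_cmult_right')
  then show ?thesis unfolding l2_norm_eq_sqrt by (simp add: real_sqrt_mult)
qed

lemma l2_comparison: "g \<in> l2 \<Longrightarrow> (\<And>x. cmod (f x) \<le> cmod (g x)) \<Longrightarrow> f \<in> l2"
  unfolding mem_l2_iff by (erule summable_on_comparison_test) (auto intro: power_mono)

lemma l2_scale: "f \<in> l2 \<Longrightarrow> (\<lambda>x. c * f x) \<in> l2"
  unfolding mem_l2_iff by (simp add: norm_mult power_mult_distrib summable_on_cmult_right)

lemma l2_add: assumes "f \<in> l2" "g \<in> l2" shows "(\<lambda>x. f x + g x) \<in> l2"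
proof -
  have "(cmod (a + b))\<^sup>2 \<le> 2 * (cmod a)\<^sup>2 + 2 * (cmod b)\<^sup>2" for a b :: complex
  proof -
    have "(cmod (a + b))\<^sup>2 \<le> (cmod a + cmod b)\<^sup>2" by (simp add: power_mono norm_triangle_ineq)
    also have "\<dots> \<le> 2 * (cmod a)\<^sup>2 + 2 * (cmod b)\<^sup>2"
      using sum_squares_bound[of "cmod a" "cmod b"] by (simp add: power2_eq_square algebra_simps)
    finally show ?thesis .
  qed
  moreover have "(\<lambda>x. 2 * (cmod (f x))\<^sup>2 + 2 * (cmod (g x))\<^sup>2) summable_on UNIV"
    using assms unfolding mem_l2_iff by (intro summable_on_add summable_on_cmult_right)
  ultimately show ?thesis unfolding mem_l2_iff
    by (elim summable_on_comparison_test) auto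
qed

lemma l2_sum: "finite S \<Longrightarrow> (\<And>u. u \<in> S \<Longrightarrow> h u \<in> l2) \<Longrightarrow> (\<lambda>y. \<Sum>u\<in>S. c u * h u y) \<in> l2"
  by (induction S rule: finite_induct) (auto intro!: l2_add l2_scale)

lemma l2_finite_support: "finite {x. f x \<noteq> 0} \<Longrightarrow> f \<in> l2"
  unfolding mem_l2_iff
  by (intro finite_nonzero_values_imp_summable_on) (auto elim: rev_finite_subset)

lemma l2_reindex_bij:
  assumes "bij h" and "f \<in> l2"
  shows "(\<lambda>x. f (h x)) \<in> l2" and "l2_norm (\<lambda>x. f (h x)) = l2_norm f"
proof -
  have i: "inj h" and r: "range h = UNIV" using assms(1) by (auto simp: bij_def)
  have "(\<lambda>x. (cmod (f x))\<^sup>2) summable_on (h ` UNIV)" using assms(2) r by (simp add: mem_l2_iff)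
  then show "(\<lambda>x. f (h x)) \<in> l2" unfolding mem_l2_iff
    using summable_on_reindex[OF inj_on_subset[OF i subset_UNIV], of "\<lambda>x. (cmod (f x))\<^sup>2"]
    by (simp add: o_def)
  have "infsum (\<lambda>x. (cmod (f x))\<^sup>2) (h ` UNIV) = infsum ((\<lambda>x. (cmod (f x))\<^sup>2) \<circ> h) UNIV"
    by (rule infsum_reindex) (use i in auto)
  then show "l2_norm (\<lambda>x. f (h x)) = l2_norm f" using r by (simp add: l2_norm_def o_def)
qed

lemma l2_mult_summable_and_bound:
  assumes "f \<in> l2" and "g \<in> l2"
  shows "(\<lambda>x. f x * g x) summable_on UNIV"
    and "cmod (infsum (\<lambda>x. f x * g x) UNIV) \<le> l2_norm f * l2_norm g"
proof -
  note cs = infsum_mult_le_sqrt[of "\<lambda>x. cmod (f x)" "\<lambda>x. cmod (g x)" UNIV]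
  have ab: "(\<lambda>x. norm (f x * g x)) summable_on UNIV"
    using cs(1) assms by (simp add: norm_mult mem_l2_iff)
  then show "(\<lambda>x. f x * g x) summable_on UNIV" by (rule abs_summable_summable)
  have "cmod (infsum (\<lambda>x. f x * g x) UNIV) \<le> infsum (\<lambda>x. cmod (f x) * cmod (g x)) UNIV"
    using norm_infsum_bound[OF ab] by (simp add: norm_mult)
  also have "\<dots> \<le> l2_norm f * l2_norm g"
    using cs(2) assms by (simp add: mem_l2_iff l2_norm_def)
  finally show "cmod (infsum (\<lambda>x. f x * g x) UNIV) \<le> l2_norm f * l2_norm g" .
qed

definition dirac :: "'a \<Rightarrow> 'a \<Rightarrow> complex" where
  "dirac u = (\<lambda>x. if x = u then 1 else 0)"

lemma l2_dirac: "dirac u \<in> l2" and l2_norm_dirac: "l2_norm (dirac u) = 1"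
proof -
  show "dirac u \<in> l2" by (rule l2_finite_support) (auto simp: dirac_def)
  have "infsum (\<lambda>x. (cmod (dirac u x))\<^sup>2) UNIV = 1"
    by (rule infsumI, rule has_sum_finite_neutralI[of "{u}"]) (auto simp: dirac_def)
  then show "l2_norm (dirac u) = 1" by (simp add: l2_norm_def)
qed

lemma delta_e_eq_dirac: "delta_e = dirac 0"
  by (simp add: delta_e_def dirac_def fun_eq_iff)

lemma l2_sqnorm_lessThan:
  fixes z :: "nat \<Rightarrow> complex"
  assumes "\<And>i. i \<ge> n \<Longrightarrow> z i = 0"
  shows "z \<in> l2" and "l2_sqnorm z = (\<Sum>i<n. (cmod (z i))\<^sup>2)"
proof -
  have h: "((\<lambda>i. (cmod (z i))\<^sup>2) has_sum (\<Sum>i<n. (cmod (z i))\<^sup>2)) UNIV"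
    by (rule has_sum_finite_neutralI) (use assms in \<open>auto simp: not_less\<close>)
  then show "z \<in> l2" and "l2_sqnorm z = (\<Sum>i<n. (cmod (z i))\<^sup>2)"
    by (auto simp: has_sum_iff mem_l2_iff l2_sqnorm_def)
qed

lemma cmod_sum_cnj_mult_le:
  fixes z u :: "nat \<Rightarrow> complex"
  assumes z: "\<And>i. i \<ge> n \<Longrightarrow> z i = 0" and u: "\<And>i. i \<ge> n \<Longrightarrow> u i = 0"
  shows "cmod (\<Sum>i<n. cnj (z i) * u i) \<le> l2_norm z * l2_norm u"
proof -
  have e: "(\<Sum>i<n. cnj (z i) * u i) = infsum (\<lambda>i. cnj (z i) * u i) UNIV"
    by (rule infsumI[symmetric], rule has_sum_finite_neutralI) (use z in \<open>auto simp: not_less\<close>)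
  have zc: "(\<lambda>i. cnj (z i)) \<in> l2" using l2_sqnorm_lessThan(1)[of n "\<lambda>i. cnj (z i)"] z by simp
  have "cmod (infsum (\<lambda>i. cnj (z i) * u i) UNIV) \<le> l2_norm (\<lambda>i. cnj (z i)) * l2_norm u"
    by (rule l2_mult_summable_and_bound(2)[OF zc l2_sqnorm_lessThan(1)[OF u]])
  then show ?thesis unfolding e by (simp add: l2_norm_def)
qed

lemma l2_norm_le_if_inner_le:
  fixes z :: "nat \<Rightarrow> complex"
  assumes z: "\<And>i. i \<ge> n \<Longrightarrow> z i = 0" and R: "R \<ge> 0"
    and le: "cmod (\<Sum>i<n. cnj (z i) * z i) \<le> l2_norm z * R"
  shows "l2_norm z \<le> R"
proof -
  have "cnj (z i) * z i = of_real ((cmod (z i))\<^sup>2)" for i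
    by (metis complex_norm_square mult.commute)
  then have "(\<Sum>i<n. cnj (z i) * z i) = (\<Sum>i<n. of_real ((cmod (z i))\<^sup>2))"
    by (intro sum.cong) auto
  also have "\<dots> = of_real (\<Sum>i<n. (cmod (z i))\<^sup>2)" by (rule of_real_sum[symmetric])
  finally have "cmod (\<Sum>i<n. cnj (z i) * z i) = \<bar>\<Sum>i<n. (cmod (z i))\<^sup>2\<bar>"
    by (simp only: norm_of_real)
  also have "\<dots> = (l2_norm z)\<^sup>2"
    by (simp add: l2_norm_power2 l2_sqnorm_lessThan(2)[OF z] sum_nonneg)
  finally have "cmod (\<Sum>i<n. cnj (z i) * z i) = (l2_norm z)\<^sup>2" .
  with le have le': "l2_norm z * l2_norm z \<le> l2_norm z * R" by (simp add: power2_eq_square)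
  show ?thesis
  proof (cases "l2_norm z = 0")
    case False
    then have "l2_norm z > 0" using l2_norm_nonneg[of z] by linarith
    then show ?thesis using le' by (simp add: mult_le_cancel_left_pos)
  qed (use R in simp)
qed

lemma summable_on_slice_sums:
  fixes F :: "'a \<times> 'b \<Rightarrow> complex"
  assumes F: "F \<in> l2" and J: "finite J"
  shows "(\<lambda>h. \<Sum>j\<in>J. (cmod (F (h, j)))\<^sup>2) summable_on UNIV"
    and "infsum (\<lambda>h. \<Sum>j\<in>J. (cmod (F (h, j)))\<^sup>2) UNIV \<le> l2_sqnorm F"
proof -
  have fin: "(\<Sum>h\<in>H. \<Sum>j\<in>J. (cmod (F (h, j)))\<^sup>2) \<le> l2_sqnorm F" if H: "finite H" for H
  proof -
    have "(\<Sum>h\<in>H. \<Sum>j\<in>J. (cmod (F (h, j)))\<^sup>2) = (\<Sum>p\<in>H \<times> J. (cmod (F p))\<^sup>2)"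
      by (rule sum.cartesian_product'[symmetric])
    also have "\<dots> \<le> l2_sqnorm F" using H J by (intro sum_le_l2_sqnorm F) simp
    finally show ?thesis .
  qed
  show "(\<lambda>h. \<Sum>j\<in>J. (cmod (F (h, j)))\<^sup>2) summable_on UNIV"
    by (rule nonneg_summable_on_finite_sums_le(1)[where B="l2_sqnorm F"]) (auto simp: sum_nonneg fin)
  show "infsum (\<lambda>h. \<Sum>j\<in>J. (cmod (F (h, j)))\<^sup>2) UNIV \<le> l2_sqnorm F"
    by (rule nonneg_summable_on_finite_sums_le(2)) (auto simp: sum_nonneg fin)
qed

lemma l2_slice: "F \<in> l2 \<Longrightarrow> (\<lambda>h. F (h, j)) \<in> l2"
  using summable_on_slice_sums(1)[of F "{j}"] by (simp add: mem_l2_iff)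

lemma sum_l2_sqnorm_slices_le:
  fixes F :: "'a \<times> 'b \<Rightarrow> complex"
  assumes F: "F \<in> l2" and J: "finite J"
  shows "(\<Sum>j\<in>J. l2_sqnorm (\<lambda>h. F (h, j))) \<le> l2_sqnorm F"
proof -
  have s: "(\<lambda>h. (cmod (F (h, j)))\<^sup>2) summable_on UNIV" for j
    using l2_slice[OF F] by (simp add: mem_l2_iff)
  have "(\<Sum>j\<in>J. l2_sqnorm (\<lambda>h. F (h, j))) = infsum (\<lambda>h. \<Sum>j\<in>J. (cmod (F (h, j)))\<^sup>2) UNIV"
    unfolding l2_sqnorm_def
    by (rule summable_on_sum_infsum_sum(2)[OF J, where h="\<lambda>j h. (cmod (F (h, j)))\<^sup>2", symmetric])
       (rule s)
  then show ?thesis using summable_on_slice_sums(2)[OF F J] by simp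
qed

lemma l2_sqnorm_le_by_rows:
  fixes G :: "'a \<times> nat \<Rightarrow> complex"
  assumes zero: "\<And>g i. i \<ge> m \<Longrightarrow> G (g, i) = 0"
    and row: "\<And>g. (\<Sum>i<m. (cmod (G (g, i)))\<^sup>2) \<le> h g" and h: "h summable_on UNIV"
  shows "G \<in> l2" and "l2_sqnorm G \<le> infsum h UNIV"
proof -
  have "(\<Sum>p\<in>P. (cmod (G p))\<^sup>2) \<le> infsum h UNIV" if P: "finite P" for P
  proof -
    have h0: "h g \<ge> 0" for g by (rule order_trans[OF sum_nonneg row]) simp
    have "(\<Sum>p\<in>P. (cmod (G p))\<^sup>2) \<le> (\<Sum>p\<in>fst ` P \<times> {..<m}. (cmod (G p))\<^sup>2)"
    proof -
      have "(\<Sum>p\<in>P. (cmod (G p))\<^sup>2) = (\<Sum>p\<in>P \<inter> (fst ` P \<times> {..<m}). (cmod (G p))\<^sup>2)"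
      proof (rule sum.mono_neutral_right[OF P])
        show "\<forall>p\<in>P - P \<inter> (fst ` P \<times> {..<m}). (cmod (G p))\<^sup>2 = 0"
        proof
          fix p assume "p \<in> P - P \<inter> (fst ` P \<times> {..<m})"
          then have "snd p \<ge> m" by (cases p) force
          then show "(cmod (G p))\<^sup>2 = 0" using zero by (cases p) simp
        qed
      qed auto
      also have "\<dots> \<le> (\<Sum>p\<in>fst ` P \<times> {..<m}. (cmod (G p))\<^sup>2)"
        using P by (intro sum_mono2) auto
      finally show ?thesis .
    qed
    also have "\<dots> = (\<Sum>g\<in>fst ` P. \<Sum>i<m. (cmod (G (g, i)))\<^sup>2)" by (rule sum.cartesian_product')
    also have "\<dots> \<le> (\<Sum>g\<in>fst ` P. h g)" by (intro sum_mono row)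
    also have "\<dots> \<le> infsum h UNIV" using P h0 by (intro finite_sum_le_infsum h) auto
    finally show ?thesis .
  qed
  then show "G \<in> l2" and "l2_sqnorm G \<le> infsum h UNIV"
    using nonneg_summable_on_finite_sums_le[of UNIV "\<lambda>p. (cmod (G p))\<^sup>2"]
    by (auto simp: mem_l2_iff l2_sqnorm_def)
qed

section \<open>Bounded operators\<close>

lemma bounded_op_l2: "bounded_op A \<Longrightarrow> f \<in> l2 \<Longrightarrow> A f \<in> l2"
  and bounded_op_add: "bounded_op A \<Longrightarrow> f \<in> l2 \<Longrightarrow> g \<in> l2 \<Longrightarrow> A (\<lambda>x. f x + g x) = (\<lambda>x. A f x + A g x)"
  and bounded_op_scale: "bounded_op A \<Longrightarrow> f \<in> l2 \<Longrightarrow> A (\<lambda>x. c * f x) = (\<lambda>x. c * A f x)"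
  and bounded_op_bounded: "bounded_op A \<Longrightarrow> \<exists>K. \<forall>f\<in>l2. l2_norm (A f) \<le> K * l2_norm f"
  unfolding bounded_op_def by blast+

lemma bounded_op_sum:
  assumes A: "bounded_op A" and S: "finite S" and h: "\<And>u. u \<in> S \<Longrightarrow> h u \<in> l2"
  shows "A (\<lambda>y. \<Sum>u\<in>S. c u * h u y) = (\<lambda>y. \<Sum>u\<in>S. c u * A (h u) y)"
  using S h
proof (induction S rule: finite_induct)
  case empty
  then show ?case using bounded_op_scale[OF A l2_zero, of 0] by simp
next
  case (insert v S)
  have "A (\<lambda>y. c v * h v y + (\<Sum>u\<in>S. c u * h u y))
      = (\<lambda>y. A (\<lambda>y. c v * h v y) y + A (\<lambda>y. \<Sum>u\<in>S. c u * h u y) y)"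
    using insert by (intro bounded_op_add[OF A] l2_scale l2_sum) auto
  then show ?case using insert bounded_op_scale[OF A, of "h v" "c v"] by simp
qed

lemma op_norm_le:
  assumes "\<And>f. f \<in> l2 \<Longrightarrow> l2_norm f \<le> 1 \<Longrightarrow> l2_norm (A f) \<le> B"
  shows "op_norm A \<le> B"
  unfolding op_norm_def
proof (rule cSUP_least)
  have "(\<lambda>x. 0) \<in> {f \<in> l2. l2_norm f \<le> 1}" by simp
  then show "{f \<in> l2. l2_norm f \<le> 1} \<noteq> {}" by blast
qed (use assms in auto)

lemma l2_norm_apply_le_op_norm:
  assumes hom: "\<And>f c. f \<in> l2 \<Longrightarrow> A (\<lambda>x. c * f x) = (\<lambda>x. c * A f x)"
    and bnd: "\<And>f. f \<in> l2 \<Longrightarrow> l2_norm (A f) \<le> K * l2_norm f"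
    and f: "f \<in> l2"
  shows "l2_norm (A f) \<le> op_norm A * l2_norm f"
proof (cases "l2_norm f = 0")
  case True
  then have "f = (\<lambda>x. 0)" using l2_norm_eq_0_imp[OF f] by simp
  then have "A f = (\<lambda>x. 0)" using hom[OF l2_zero, of 0] by simp
  then show ?thesis using True by simp
next
  case False
  then have pos: "l2_norm f > 0" using l2_norm_nonneg[of f] by linarith
  define g where "g = (\<lambda>x. of_real (1 / l2_norm f) * f x)"
  have "g \<in> l2" unfolding g_def by (rule l2_scale[OF f])
  moreover have "l2_norm g = 1" using pos unfolding g_def l2_norm_scale by (simp add: norm_divide)
  ultimately have g: "g \<in> l2" "l2_norm g = 1" by auto
  have "bdd_above ((\<lambda>f. l2_norm (A f)) ` {f \<in> l2. l2_norm f \<le> 1})"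
  proof (rule bdd_aboveI[where M="max K 0"])
    fix y assume "y \<in> (\<lambda>f. l2_norm (A f)) ` {f \<in> l2. l2_norm f \<le> 1}"
    then obtain h where h: "h \<in> l2" "l2_norm h \<le> 1" "y = l2_norm (A h)" by auto
    have "K * l2_norm h \<le> max K 0 * 1"
      using h(2) l2_norm_nonneg[of h] by (intro mult_mono) auto
    then show "y \<le> max K 0" using bnd[OF h(1)] h(3) by simp
  qed
  then have Ag: "l2_norm (A g) \<le> op_norm A"
    unfolding op_norm_def using g by (intro cSUP_upper) auto
  have "A f = (\<lambda>x. of_real (l2_norm f) * A g x)"
    using hom[OF g(1), of "of_real (l2_norm f)"] pos by (simp add: g_def)
  then have "l2_norm (A f) = l2_norm f * l2_norm (A g)" by (simp add: l2_norm_scale l2_norm_nonneg)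
  then show ?thesis using mult_left_mono[OF Ag, of "l2_norm f"] pos by (simp add: mult.commute)
qed

lemma bounded_op_apply_le:
  assumes A: "bounded_op A" and f: "f \<in> l2"
  shows "l2_norm (A f) \<le> op_norm A * l2_norm f"
proof -
  obtain K where "\<forall>f\<in>l2. l2_norm (A f) \<le> K * l2_norm f" using bounded_op_bounded[OF A] by blast
  then show ?thesis by (intro l2_norm_apply_le_op_norm[OF bounded_op_scale[OF A] _ f]) auto
qed

lemma l2_sqnorm_apply_le:
  assumes "bounded_op A" and "f \<in> l2"
  shows "l2_sqnorm (A f) \<le> (op_norm A)\<^sup>2 * l2_sqnorm f"
proof -
  have "(l2_norm (A f))\<^sup>2 \<le> (op_norm A * l2_norm f)\<^sup>2"
    using bounded_op_apply_le[OF assms] by (intro power_mono) (simp_all add: l2_norm_nonneg)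
  then show ?thesis by (simp add: l2_norm_power2 power_mult_distrib)
qed

lemma op_norm_nonneg:
  assumes "bounded_op A" shows "op_norm A \<ge> 0"
proof -
  have "l2_norm (A (dirac u)) \<le> op_norm A" for u
    using bounded_op_apply_le[OF assms l2_dirac] by (simp add: l2_norm_dirac)
  then show ?thesis using l2_norm_nonneg order_trans by blast
qed

section \<open>The group von Neumann algebra\<close>

definition rtrans :: "'g::group_add \<Rightarrow> 'g op" where
  "rtrans v = (\<lambda>f x. f (x + v))"

lemma bounded_op_reindex: "bij h \<Longrightarrow> bounded_op (\<lambda>f x. f (h x))"
  unfolding bounded_op_def using l2_reindex_bij[of h]
  by (intro conjI ballI allI exI[where x=1]) simp_all

lemma bounded_op_rtrans: "bounded_op (rtrans v)"
  unfolding rtrans_def by (rule bounded_op_reindex[OF bij_plus_right])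

lemma bounded_op_lam: "bounded_op (lam s)"
  unfolding lam_def using bounded_op_reindex[OF bij_plus[of "- s"]] by simp

lemma l2_lam: "f \<in> l2 \<Longrightarrow> lam s f \<in> l2"
  by (rule bounded_op_l2[OF bounded_op_lam])

lemma rtrans_in_commutant: "rtrans v \<in> commutant (range lam)"
  unfolding commutant_def using bounded_op_rtrans by (simp add: rtrans_def lam_def add.assoc)

lemma VN_bounded_op: "x \<in> VN \<Longrightarrow> bounded_op x"
  by (simp add: VN_def commutant_def)

lemma VN_commute: "x \<in> VN \<Longrightarrow> A \<in> commutant (range lam) \<Longrightarrow> f \<in> l2 \<Longrightarrow> A (x f) = x (A f)"
  by (simp add: VN_def commutant_def)

lemma lam_in_VN: "lam s \<in> VN"
  unfolding VN_def commutant_def using bounded_op_lam by auto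

lemma VN_apply_dirac: "x \<in> VN \<Longrightarrow> x (dirac u) = (\<lambda>y. x (dirac 0) (y + - u))"
proof -
  assume x: "x \<in> VN"
  have "dirac u = rtrans (- u) (dirac 0)"
    by (simp add: dirac_def rtrans_def fun_eq_iff eq_neg_iff_add_eq_0)
  then have "x (dirac u) = rtrans (- u) (x (dirac 0))"
    using VN_commute[OF x rtrans_in_commutant l2_dirac] by simp
  then show ?thesis by (simp add: rtrans_def)
qed

lemma l2_sqnorm_outside:
  assumes f: "f \<in> l2" and S: "finite S"
  shows "l2_sqnorm (\<lambda>y. if y \<in> S then 0 else f y) = l2_sqnorm f - (\<Sum>y\<in>S. (cmod (f y))\<^sup>2)"
proof -
  define q where "q y = (cmod (f y))\<^sup>2" for y
  have qS: "((\<lambda>y. if y \<in> S then q y else 0) has_sum (\<Sum>y\<in>S. q y)) UNIV"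
    by (rule has_sum_finite_neutralI[OF S]) auto
  have "((\<lambda>y. q y - (if y \<in> S then q y else 0)) has_sum (l2_sqnorm f - (\<Sum>y\<in>S. q y))) UNIV"
    using f qS by (intro has_sum_diff) (auto simp: mem_l2_iff q_def l2_sqnorm_def)
  moreover have "(\<lambda>y. q y - (if y \<in> S then q y else 0)) = (\<lambda>y. (cmod (if y \<in> S then 0 else f y))\<^sup>2)"
    by (auto simp: q_def)
  ultimately show ?thesis
    unfolding l2_sqnorm_def[of "\<lambda>y. if y \<in> S then 0 else f y"] by (simp add: infsumI q_def)
qed

lemma VN_apply_finite_part:
  assumes x: "x \<in> VN" and S: "finite S"
  shows "x (\<lambda>y. if y \<in> S then f y else 0) = (\<lambda>g. \<Sum>u\<in>S. f u * x (dirac 0) (g + - u))"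
proof -
  have eq: "(\<lambda>y. \<Sum>u\<in>S. f u * dirac u y) = (\<lambda>y. if y \<in> S then f y else 0)"
  proof
    fix y
    have "(\<Sum>u\<in>S. f u * dirac u y) = (\<Sum>u\<in>S. if y = u then f u else 0)"
      by (intro sum.cong) (auto simp: dirac_def)
    then show "(\<Sum>u\<in>S. f u * dirac u y) = (if y \<in> S then f y else 0)" using S by simp
  qed
  have "x (\<lambda>y. \<Sum>u\<in>S. f u * dirac u y) = (\<lambda>y. \<Sum>u\<in>S. f u * x (dirac u) y)"
    by (rule bounded_op_sum[OF VN_bounded_op[OF x] S l2_dirac])
  also have "\<dots> = (\<lambda>g. \<Sum>u\<in>S. f u * x (dirac 0) (g + - u))"
    by (intro ext sum.cong refl) (subst VN_apply_dirac[OF x], rule refl)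
  finally show ?thesis unfolding eq .
qed

lemma cmod_VN_apply_sub_finite_part_le:
  assumes x: "x \<in> VN" and f: "f \<in> l2" and S: "finite S"
  shows "cmod (x f g - (\<Sum>u\<in>S. f u * x (dirac 0) (g + - u)))
      \<le> op_norm x * sqrt (l2_sqnorm f - (\<Sum>y\<in>S. (cmod (f y))\<^sup>2))"
proof -
  define tail where "tail = (\<lambda>y. if y \<in> S then 0 else f y)"
  have tail: "tail \<in> l2" unfolding tail_def by (rule l2_comparison[OF f]) auto
  have fS: "(\<lambda>y. if y \<in> S then f y else 0) \<in> l2" by (rule l2_comparison[OF f]) auto
  have "x f = x (\<lambda>y. (if y \<in> S then f y else 0) + tail y)"
    by (rule arg_cong[where f=x]) (auto simp: tail_def)
  also have "\<dots> = (\<lambda>y. x (\<lambda>y. if y \<in> S then f y else 0) y + x tail y)"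
    by (rule bounded_op_add[OF VN_bounded_op[OF x] fS tail])
  finally have "x f g - (\<Sum>u\<in>S. f u * x (dirac 0) (g + - u)) = x tail g"
    by (simp add: VN_apply_finite_part[OF x S])
  moreover have "cmod (x tail g) \<le> op_norm x * l2_norm tail"
    using norm_le_l2_norm[OF bounded_op_l2[OF VN_bounded_op[OF x] tail]]
          bounded_op_apply_le[OF VN_bounded_op[OF x] tail] by (rule order_trans)
  ultimately show ?thesis by (simp add: l2_norm_eq_sqrt tail_def l2_sqnorm_outside[OF f S])
qed

text \<open>Approximate \<open>f\<close> by its restrictions to finite sets and control the tails by the
  boundedness of \<open>x\<close>.\<close>

lemma VN_has_sum_conv:
  assumes x: "x \<in> VN" and f: "f \<in> l2"
  shows "((\<lambda>s. x (dirac 0) s * f (- s + g)) has_sum x f g) UNIV"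
proof -
  have "((\<lambda>S. \<Sum>y\<in>S. (cmod (f y))\<^sup>2) \<longlongrightarrow> l2_sqnorm f) (finite_subsets_at_top UNIV)"
    using f by (simp add: has_sum_def[symmetric] mem_l2_iff l2_sqnorm_def)
  then have "((\<lambda>S. op_norm x * sqrt (l2_sqnorm f - (\<Sum>y\<in>S. (cmod (f y))\<^sup>2)))
      \<longlongrightarrow> op_norm x * sqrt (l2_sqnorm f - l2_sqnorm f)) (finite_subsets_at_top UNIV)"
    by (intro tendsto_mult tendsto_const tendsto_real_sqrt tendsto_diff)
  then have lim: "((\<lambda>S. op_norm x * sqrt (l2_sqnorm f - (\<Sum>y\<in>S. (cmod (f y))\<^sup>2))) \<longlongrightarrow> 0)
      (finite_subsets_at_top UNIV)" by simp
  have "\<forall>\<^sub>F S in finite_subsets_at_top UNIV. cmod (x f g - (\<Sum>u\<in>S. f u * x (dirac 0) (g + - u)))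
      \<le> op_norm x * sqrt (l2_sqnorm f - (\<Sum>y\<in>S. (cmod (f y))\<^sup>2))"
    using cmod_VN_apply_sub_finite_part_le[OF x f] by (rule eventually_finite_subsets_at_top_weakI)
  from Lim_null_comparison[OF this lim]
  have "((\<lambda>S. x f g - (\<Sum>u\<in>S. f u * x (dirac 0) (g + - u))) \<longlongrightarrow> 0) (finite_subsets_at_top UNIV)" .
  then have "((\<lambda>S. x f g - (x f g - (\<Sum>u\<in>S. f u * x (dirac 0) (g + - u)))) \<longlongrightarrow> x f g - 0)
      (finite_subsets_at_top UNIV)"
    by (intro tendsto_diff tendsto_const)
  then have "((\<lambda>u. f u * x (dirac 0) (g + - u)) has_sum x f g) UNIV" by (simp add: has_sum_def)
  moreover have "((\<lambda>u. f u * x (dirac 0) (g + - u)) has_sum x f g) UNIV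
      \<longleftrightarrow> ((\<lambda>s. x (dirac 0) s * f (- s + g)) has_sum x f g) UNIV"
    by (rule has_sum_reindex_bij_witness[where i="\<lambda>s. - s + g" and j="\<lambda>u. g + - u"])
       (auto simp: add.assoc[symmetric] minus_add)
  ultimately show ?thesis by simp
qed

section \<open>Convolution operators\<close>

definition conv :: "('g::group_add \<Rightarrow> complex) \<Rightarrow> 'g op" where
  "conv c = (\<lambda>f g. infsum (\<lambda>s. c s * f (- s + g)) UNIV)"

definition l1_norm :: "('a \<Rightarrow> complex) \<Rightarrow> real" where
  "l1_norm c = infsum (\<lambda>s. cmod (c s)) UNIV"

lemma l1_norm_nonneg: "l1_norm c \<ge> 0"
  unfolding l1_norm_def by (intro infsum_nonneg) auto

lemma young_l1_l2:
  fixes w u :: "'g::group_add \<Rightarrow> real"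
  assumes w0: "\<And>s. w s \<ge> 0" and ws: "w summable_on UNIV"
    and u0: "\<And>s. u s \<ge> 0" and us: "(\<lambda>s. (u s)\<^sup>2) summable_on UNIV"
  shows "(\<lambda>s. w s * u (- s + g)) summable_on UNIV"
    and "(\<lambda>g. (infsum (\<lambda>s. w s * u (- s + g)) UNIV)\<^sup>2) summable_on UNIV"
    and "infsum (\<lambda>g. (infsum (\<lambda>s. w s * u (- s + g)) UNIV)\<^sup>2) UNIV
           \<le> (infsum w UNIV)\<^sup>2 * infsum (\<lambda>s. (u s)\<^sup>2) UNIV"
proof -
  define W where "W = infsum w UNIV"
  define U where "U = infsum (\<lambda>s. (u s)\<^sup>2) UNIV"
  define Phi where "Phi g = infsum (\<lambda>s. w s * u (- s + g)) UNIV" for g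
  define V where "V g = infsum (\<lambda>s. w s * (u (- s + g))\<^sup>2) UNIV" for g
  have W0: "W \<ge> 0" unfolding W_def using w0 by (intro infsum_nonneg) auto
  have ub: "(u y)\<^sup>2 \<le> U" for y unfolding U_def using finite_sum_le_infsum[OF us, of "{y}"] by simp
  have s2: "(\<lambda>s. w s * (u (- s + g))\<^sup>2) summable_on UNIV" for g
    by (rule summable_on_comparison_test[OF summable_on_cmult_left[OF ws, of U]])
       (use w0 ub in \<open>auto intro: mult_left_mono\<close>)
  note cs = power2_infsum_weighted_le[OF w0 u0 ws s2]
  show "(\<lambda>s. w s * u (- s + g)) summable_on UNIV" for g by (rule cs(1))
  have pw: "(Phi g)\<^sup>2 \<le> W * V g" for g unfolding Phi_def V_def W_def by (rule cs(2))
  have "(\<Sum>g\<in>F. (Phi g)\<^sup>2) \<le> W\<^sup>2 * U" if F: "finite F" for F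
  proof -
    have "(\<Sum>g\<in>F. (Phi g)\<^sup>2) \<le> W * (\<Sum>g\<in>F. V g)"
      by (simp add: sum_distrib_left sum_mono pw)
    also have "(\<Sum>g\<in>F. V g) = infsum (\<lambda>s. \<Sum>g\<in>F. w s * (u (- s + g))\<^sup>2) UNIV"
      unfolding V_def by (rule summable_on_sum_infsum_sum(2)[symmetric, OF F s2])
    also have "\<dots> \<le> infsum (\<lambda>s. w s * U) UNIV"
    proof (rule infsum_mono)
      show "(\<lambda>s. \<Sum>g\<in>F. w s * (u (- s + g))\<^sup>2) summable_on UNIV"
        by (rule summable_on_sum_infsum_sum(1)[OF F s2])
      show "(\<lambda>s. w s * U) summable_on UNIV" by (rule summable_on_cmult_left[OF ws])
      fix s
      have "(\<Sum>g\<in>F. (u (- s + g))\<^sup>2) = (\<Sum>y\<in>(\<lambda>g. - s + g) ` F. (u y)\<^sup>2)"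
        by (rule sum.reindex[symmetric, unfolded o_def]) (auto intro: inj_onI)
      also have "\<dots> \<le> U" unfolding U_def by (rule finite_sum_le_infsum[OF us]) (use F in auto)
      finally show "(\<Sum>g\<in>F. w s * (u (- s + g))\<^sup>2) \<le> w s * U"
        using w0[of s] by (simp add: sum_distrib_left[symmetric] mult_left_mono)
    qed
    also have "\<dots> = W * U" using infsum_cmult_left'[of w U UNIV] by (simp add: W_def)
    finally show ?thesis using W0 by (simp add: power2_eq_square mult_left_mono mult.assoc)
  qed
  then show "(\<lambda>g. (infsum (\<lambda>s. w s * u (- s + g)) UNIV)\<^sup>2) summable_on UNIV"
    and "infsum (\<lambda>g. (infsum (\<lambda>s. w s * u (- s + g)) UNIV)\<^sup>2) UNIV
           \<le> (infsum w UNIV)\<^sup>2 * infsum (\<lambda>s. (u s)\<^sup>2) UNIV"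
    using nonneg_summable_on_finite_sums_le[of UNIV "\<lambda>g. (Phi g)\<^sup>2" "W\<^sup>2 * U"]
    by (auto simp: Phi_def W_def U_def)
qed

lemma conv_summable:
  assumes c: "(\<lambda>s. cmod (c s)) summable_on UNIV" and f: "f \<in> l2"
  shows "(\<lambda>s. c s * f (- s + g)) summable_on UNIV"
    and "cmod (conv c f g) \<le> infsum (\<lambda>s. cmod (c s) * cmod (f (- s + g))) UNIV"
proof -
  have s: "(\<lambda>s. cmod (c s) * cmod (f (- s + g))) summable_on UNIV"
    by (rule summable_on_comparison_test[OF summable_on_cmult_left[OF c, of "l2_norm f"]])
       (auto intro: mult_left_mono norm_le_l2_norm[OF f])
  then have s': "(\<lambda>s. norm (c s * f (- s + g))) summable_on UNIV" by (simp add: norm_mult)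
  then show "(\<lambda>s. c s * f (- s + g)) summable_on UNIV" by (rule abs_summable_summable)
  show "cmod (conv c f g) \<le> infsum (\<lambda>s. cmod (c s) * cmod (f (- s + g))) UNIV"
    unfolding conv_def using norm_infsum_bound[OF s'] by (simp add: norm_mult)
qed

lemma l2_conv:
  assumes c: "(\<lambda>s. cmod (c s)) summable_on UNIV" and f: "f \<in> l2"
  shows "conv c f \<in> l2" and "l2_norm (conv c f) \<le> l1_norm c * l2_norm f"
proof -
  have u: "(\<lambda>s. (cmod (f s))\<^sup>2) summable_on UNIV" using f by (simp add: mem_l2_iff)
  note y = young_l1_l2[of "\<lambda>s. cmod (c s)" "\<lambda>s. cmod (f s)", OF _ c _ u]
  have le: "(cmod (conv c f g))\<^sup>2 \<le> (infsum (\<lambda>s. cmod (c s) * cmod (f (- s + g))) UNIV)\<^sup>2" for g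
    by (intro power_mono conv_summable(2)[OF c f]) auto
  show l: "conv c f \<in> l2" unfolding mem_l2_iff
    by (rule summable_on_comparison_test[OF y(2)]) (use le in auto)
  have "l2_sqnorm (conv c f) \<le> infsum (\<lambda>g. (infsum (\<lambda>s. cmod (c s) * cmod (f (- s + g))) UNIV)\<^sup>2) UNIV"
    unfolding l2_sqnorm_def by (rule infsum_mono[OF l[unfolded mem_l2_iff] y(2)]) (use le in auto)
  also have "\<dots> \<le> (l1_norm c * l2_norm f)\<^sup>2"
    using y(3) by (simp add: l1_norm_def power_mult_distrib l2_norm_power2 l2_sqnorm_def)
  finally show "l2_norm (conv c f) \<le> l1_norm c * l2_norm f"
    using l1_norm_nonneg[of c] l2_norm_nonneg[of f] by (subst l2_norm_le_iff) auto
qed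

lemma bounded_op_conv:
  assumes c: "(\<lambda>s. cmod (c s)) summable_on UNIV"
  shows "bounded_op (conv c)"
  unfolding bounded_op_def
proof (intro conjI ballI allI)
  fix f :: "'a \<Rightarrow> complex" and k :: complex
  assume "f \<in> l2"
  then show "conv c f \<in> l2" by (rule l2_conv(1)[OF c])
  show "conv c (\<lambda>x. k * f x) = (\<lambda>x. k * conv c f x)"
    unfolding conv_def by (simp add: infsum_cmult_right' mult.left_commute)
next
  fix f g :: "'a \<Rightarrow> complex" assume f: "f \<in> l2" and g: "g \<in> l2"
  show "conv c (\<lambda>x. f x + g x) = (\<lambda>x. conv c f x + conv c g x)"
    unfolding conv_def
    by (auto simp: distrib_left intro!: infsum_add conv_summable(1)[OF c f] conv_summable(1)[OF c g])
next
  show "\<exists>K. \<forall>f\<in>l2. l2_norm (conv c f) \<le> K * l2_norm f"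
    using l2_conv(2)[OF c] by blast
qed

lemma conv_dirac: "conv c (dirac 0) = c"
proof
  fix g
  have "((\<lambda>s. c s * dirac 0 (- s + g)) has_sum c g) UNIV"
    by (rule has_sum_finite_neutralI[of "{g}"]) (auto simp: dirac_def, metis add_minus_cancel add_0_right)
  then show "conv c (dirac 0) g = c g" unfolding conv_def by (rule infsumI)
qed

lemma conv_outside:
  assumes c: "(\<lambda>s. cmod (c s)) summable_on UNIV" and f: "f \<in> l2" and S: "finite S"
  shows "conv c f g = (\<Sum>s\<in>S. c s * lam s f g) + conv (\<lambda>s. if s \<in> S then 0 else c s) f g"
    and "l1_norm (\<lambda>s. if s \<in> S then 0 else c s) = l1_norm c - (\<Sum>s\<in>S. cmod (c s))"
proof -
  have fin: "((\<lambda>s. if s \<in> S then q s else 0) has_sum (\<Sum>s\<in>S. q s)) UNIV" for q :: "_ \<Rightarrow> 'b::topological_ab_group_add"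
    by (rule has_sum_finite_neutralI[OF S]) auto
  have "((\<lambda>s. c s * f (- s + g) - (if s \<in> S then c s * f (- s + g) else 0))
      has_sum (conv c f g - (\<Sum>s\<in>S. c s * f (- s + g)))) UNIV"
    using conv_summable(1)[OF c f] fin by (intro has_sum_diff) (auto simp: conv_def)
  then have "((\<lambda>s. (if s \<in> S then 0 else c s) * f (- s + g))
      has_sum (conv c f g - (\<Sum>s\<in>S. c s * f (- s + g)))) UNIV"
    by (rule has_sum_cong[THEN iffD1, rotated]) simp
  then have "conv (\<lambda>s. if s \<in> S then 0 else c s) f g = conv c f g - (\<Sum>s\<in>S. c s * f (- s + g))"
    unfolding conv_def[of "\<lambda>s. if s \<in> S then 0 else c s"] by (rule infsumI)
  then show "conv c f g = (\<Sum>s\<in>S. c s * lam s f g) + conv (\<lambda>s. if s \<in> S then 0 else c s) f g"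
    by (simp add: lam_def)
  have "((\<lambda>s. cmod (c s) - (if s \<in> S then cmod (c s) else 0)) has_sum (l1_norm c - (\<Sum>s\<in>S. cmod (c s)))) UNIV"
    using c fin by (intro has_sum_diff) (auto simp: l1_norm_def)
  then have "((\<lambda>s. cmod (if s \<in> S then 0 else c s)) has_sum (l1_norm c - (\<Sum>s\<in>S. cmod (c s)))) UNIV"
    by (rule has_sum_cong[THEN iffD1, rotated]) simp
  then show "l1_norm (\<lambda>s. if s \<in> S then 0 else c s) = l1_norm c - (\<Sum>s\<in>S. cmod (c s))"
    unfolding l1_norm_def[of "\<lambda>s. if s \<in> S then 0 else c s"] by (rule infsumI)
qed

text \<open>Convolution by an \<open>\<ell>\<^sup>1\<close> kernel is a norm limit of finite combinations of left
  translations.\<close>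

lemma cmod_commutant_conv_sub_le:
  assumes c: "(\<lambda>s. cmod (c s)) summable_on UNIV"
    and B: "B \<in> commutant (range lam)" and f: "f \<in> l2" and S: "finite S"
  shows "cmod (B (conv c f) g - conv c (B f) g)
      \<le> (op_norm B * l2_norm f + l2_norm (B f)) * (l1_norm c - (\<Sum>s\<in>S. cmod (c s)))"
proof -
  have Bb: "bounded_op B" and Bl: "\<And>s h. h \<in> l2 \<Longrightarrow> B (lam s h) = lam s (B h)"
    using B by (auto simp: commutant_def)
  have Bf: "B f \<in> l2" by (rule bounded_op_l2[OF Bb f])
  have lamf: "lam s f \<in> l2" for s by (rule l2_lam[OF f])
  define out where "out = (\<lambda>s. if s \<in> S then 0 else c s)"
  have out: "(\<lambda>s. cmod (out s)) summable_on UNIV"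
    unfolding out_def by (rule summable_on_comparison_test[OF c]) auto
  have "conv c f = (\<lambda>y. (\<Sum>s\<in>S. c s * lam s f y) + conv out f y)"
    by (rule ext) (simp add: conv_outside(1)[OF c f S] out_def)
  then have "B (conv c f) = (\<lambda>y. B (\<lambda>y. \<Sum>s\<in>S. c s * lam s f y) y + B (conv out f) y)"
    by (simp add: bounded_op_add[OF Bb l2_sum[OF S lamf] l2_conv(1)[OF out f]])
  also have "B (\<lambda>y. \<Sum>s\<in>S. c s * lam s f y) = (\<lambda>y. \<Sum>s\<in>S. c s * lam s (B f) y)"
    using bounded_op_sum[OF Bb S lamf] Bl[OF f] by simp
  finally have "B (conv c f) g - conv c (B f) g = B (conv out f) g - conv out (B f) g"
    using conv_outside(1)[OF c Bf S] by (simp add: out_def)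
  also have "cmod \<dots> \<le> op_norm B * (l1_norm out * l2_norm f) + l1_norm out * l2_norm (B f)"
  proof (rule order_trans[OF norm_triangle_ineq4 add_mono])
    have "cmod (B (conv out f) g) \<le> op_norm B * l2_norm (conv out f)"
      by (rule order_trans[OF norm_le_l2_norm bounded_op_apply_le])
         (auto intro: bounded_op_l2 Bb l2_conv(1)[OF out f])
    also have "\<dots> \<le> op_norm B * (l1_norm out * l2_norm f)"
      by (intro mult_left_mono l2_conv(2)[OF out f] op_norm_nonneg[OF Bb])
    finally show "cmod (B (conv out f) g) \<le> op_norm B * (l1_norm out * l2_norm f)" .
    show "cmod (conv out (B f) g) \<le> l1_norm out * l2_norm (B f)"
      by (rule order_trans[OF norm_le_l2_norm[OF l2_conv(1)[OF out Bf]] l2_conv(2)[OF out Bf]])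
  qed
  finally show ?thesis using conv_outside(2)[OF c f S] by (simp add: out_def algebra_simps)
qed

lemma conv_commute:
  assumes c: "(\<lambda>s. cmod (c s)) summable_on UNIV"
    and B: "B \<in> commutant (range lam)" and f: "f \<in> l2"
  shows "B (conv c f) = conv c (B f)"
proof
  fix g
  define M where "M = op_norm B * l2_norm f + l2_norm (B f)"
  have "bounded_op B" using B by (simp add: commutant_def)
  then have M: "M \<ge> 0" unfolding M_def by (simp add: op_norm_nonneg l2_norm_nonneg)
  have "cmod (B (conv c f) g - conv c (B f) g) \<le> 0 + e" if e: "e > 0" for e
  proof -
    obtain S where S: "finite S" and "dist (\<Sum>s\<in>S. cmod (c s)) (l1_norm c) \<le> e / (M + 1)"
      using infsum_finite_approximation[OF c, of "e / (M + 1)"] e M unfolding l1_norm_def by auto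
    then have "l1_norm c - (\<Sum>s\<in>S. cmod (c s)) \<le> e / (M + 1)" by (simp add: dist_real_def)
    then have "M * (l1_norm c - (\<Sum>s\<in>S. cmod (c s))) \<le> M * (e / (M + 1))" using M by (rule mult_left_mono)
    also have "\<dots> \<le> e" using M e by (simp add: field_simps)
    finally show ?thesis using cmod_commutant_conv_sub_le[OF c B f S, of g] by (simp add: M_def)
  qed
  then have "cmod (B (conv c f) g - conv c (B f) g) \<le> 0" by (rule field_le_epsilon)
  then show "B (conv c f) g = conv c (B f) g" by simp
qed

lemma conv_in_VN:
  assumes c: "(\<lambda>s. cmod (c s)) summable_on UNIV"
  shows "conv c \<in> VN"
  unfolding VN_def commutant_def[of "commutant (range lam)"]
  using bounded_op_conv[OF c] conv_commute[OF c] by auto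

lemma fourier_mult_symbol:
  fixes psi :: "'g::group_add \<Rightarrow> real"
  assumes x: "x \<in> VN" and summable: "(\<lambda>s. exp (- t * psi s)) summable_on UNIV"
  shows "fourier_mult psi t x \<in> VN"
    and "fourier_mult psi t x (dirac 0) s = of_real (exp (- t * psi s)) * x (dirac 0) s"
proof -
  define c where "c s = of_real (exp (- t * psi s)) * x (dirac 0) s" for s
  have xd: "x (dirac 0) \<in> l2" by (rule bounded_op_l2[OF VN_bounded_op[OF x] l2_dirac])
  have "(\<lambda>s. cmod (c s)) summable_on UNIV"
    by (rule summable_on_comparison_test[OF summable_on_cmult_left[OF summable, of "l2_norm (x (dirac 0))"]])
       (auto simp: c_def norm_mult intro!: mult_left_mono norm_le_l2_norm[OF xd])
  then have "\<exists>y. y \<in> VN \<and> (\<forall>s. y delta_e s = of_real (exp (- t * psi s)) * x delta_e s)"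
    by (intro exI[where x="conv c"]) (simp add: conv_in_VN delta_e_eq_dirac conv_dirac c_def)
  from someI_ex[OF this] show "fourier_mult psi t x \<in> VN"
    and "fourier_mult psi t x (dirac 0) s = of_real (exp (- t * psi s)) * x (dirac 0) s"
    unfolding fourier_mult_def delta_e_eq_dirac by auto
qed

section \<open>Matrices of operators\<close>

lemma amp_apply: "amp m Y F (g, i) = (if i < m then (\<Sum>j<m. Y i j (\<lambda>h. F (h, j)) g) else 0)"
  by (simp add: amp_def)

lemma amp_scale:
  assumes Y: "\<And>i j. i < m \<Longrightarrow> j < m \<Longrightarrow> bounded_op (Y i j)" and F: "F \<in> l2"
  shows "amp m Y (\<lambda>p. c * F p) = (\<lambda>p. c * amp m Y F p)"
proof
  fix p :: "'a \<times> nat"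
  obtain g i where p: "p = (g, i)" by (cases p)
  have "Y i j (\<lambda>h. c * F (h, j)) g = c * Y i j (\<lambda>h. F (h, j)) g" if "i < m" "j < m" for j
    using bounded_op_scale[OF Y[OF that] l2_slice[OF F], of c] by simp
  then show "amp m Y (\<lambda>p. c * F p) p = c * amp m Y F p"
    unfolding p amp_apply by (simp add: sum_distrib_left)
qed

lemma amp_bounded:
  assumes Y: "\<And>i j. i < m \<Longrightarrow> j < m \<Longrightarrow> bounded_op (Y i j)" and F: "F \<in> l2"
  shows "amp m Y F \<in> l2"
    and "l2_norm (amp m Y F) \<le> real m * (\<Sum>i<m. \<Sum>j<m. op_norm (Y i j)) * l2_norm F"
proof -
  define K where "K = (\<Sum>i<m. \<Sum>j<m. op_norm (Y i j))"
  have K0: "K \<ge> 0" unfolding K_def using op_norm_nonneg[OF Y] by (auto intro!: sum_nonneg)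
  define T where "T g i j = (cmod (Y i j (\<lambda>h. F (h, j)) g))\<^sup>2" for g i j
  have T: "(\<lambda>g. T g i j) summable_on UNIV"
    and Tb: "infsum (\<lambda>g. T g i j) UNIV \<le> K\<^sup>2 * l2_sqnorm (\<lambda>h. F (h, j))" if ij: "i < m" "j < m" for i j
  proof -
    have YF: "Y i j (\<lambda>h. F (h, j)) \<in> l2" by (rule bounded_op_l2[OF Y[OF ij] l2_slice[OF F]])
    then show "(\<lambda>g. T g i j) summable_on UNIV" by (simp add: T_def mem_l2_iff)
    have "op_norm (Y i j) \<le> K"
      unfolding K_def using ij op_norm_nonneg[OF Y]
      by (intro order_trans[OF member_le_sum[of j] member_le_sum[of i]]) (auto intro: sum_nonneg)
    then have "(op_norm (Y i j))\<^sup>2 \<le> K\<^sup>2" using op_norm_nonneg[OF Y[OF ij]] by (simp add: power_mono)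
    then show "infsum (\<lambda>g. T g i j) UNIV \<le> K\<^sup>2 * l2_sqnorm (\<lambda>h. F (h, j))"
      using l2_sqnorm_apply_le[OF Y[OF ij] l2_slice[OF F, of j]] l2_sqnorm_nonneg[of "\<lambda>h. F (h, j)"]
      unfolding T_def l2_sqnorm_def[of "Y i j (\<lambda>h. F (h, j))"] by (meson mult_right_mono order_trans)
  qed
  have row: "(\<Sum>i<m. (cmod (amp m Y F (g, i)))\<^sup>2) \<le> real m * (\<Sum>i<m. \<Sum>j<m. T g i j)" for g
  proof -
    have "(\<Sum>i<m. (cmod (amp m Y F (g, i)))\<^sup>2) \<le> (\<Sum>i<m. real m * (\<Sum>j<m. T g i j))"
      using power2_cmod_sum_le by (intro sum_mono) (simp add: amp_apply T_def)
    then show ?thesis by (simp add: sum_distrib_left)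
  qed
  have hs: "(\<lambda>g. real m * (\<Sum>i<m. \<Sum>j<m. T g i j)) summable_on UNIV"
    using T by (intro summable_on_cmult_right summable_on_sum_infsum_sum(1)) auto
  have "infsum (\<lambda>g. \<Sum>i<m. \<Sum>j<m. T g i j) UNIV = (\<Sum>i<m. infsum (\<lambda>g. \<Sum>j<m. T g i j) UNIV)"
    using T by (intro summable_on_sum_infsum_sum(2) summable_on_sum_infsum_sum(1)) auto
  also have "\<dots> = (\<Sum>i<m. \<Sum>j<m. infsum (\<lambda>g. T g i j) UNIV)"
    using T by (intro sum.cong refl summable_on_sum_infsum_sum(2)) auto
  finally have "infsum (\<lambda>g. real m * (\<Sum>i<m. \<Sum>j<m. T g i j)) UNIV
      = real m * (\<Sum>i<m. \<Sum>j<m. infsum (\<lambda>g. T g i j) UNIV)"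
    by (simp add: infsum_cmult_right')
  also have "\<dots> \<le> real m * (\<Sum>i<m. \<Sum>j<m. K\<^sup>2 * l2_sqnorm (\<lambda>h. F (h, j)))"
    using Tb by (intro mult_left_mono sum_mono) auto
  also have "\<dots> = real m * (real m * (K\<^sup>2 * (\<Sum>j<m. l2_sqnorm (\<lambda>h. F (h, j)))))"
    by (simp add: sum_distrib_left)
  also have "\<dots> \<le> real m * (real m * (K\<^sup>2 * l2_sqnorm F))"
    using sum_l2_sqnorm_slices_le[OF F, of "{..<m}"] by (intro mult_left_mono) auto
  also have "\<dots> = (real m * K * l2_norm F)\<^sup>2"
    unfolding power_mult_distrib l2_norm_power2 by (simp add: power2_eq_square mult_ac)
  finally have "infsum (\<lambda>g. real m * (\<Sum>i<m. \<Sum>j<m. T g i j)) UNIV \<le> (real m * K * l2_norm F)\<^sup>2" .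
  with l2_sqnorm_le_by_rows[of m "amp m Y F", OF _ row hs]
  show "amp m Y F \<in> l2" and "l2_norm (amp m Y F) \<le> real m * K * l2_norm F"
    using K0 by (auto simp: amp_apply l2_norm_le_iff l2_norm_nonneg)
qed

lemma l2_norm_amp_le:
  assumes "\<And>i j. i < m \<Longrightarrow> j < m \<Longrightarrow> bounded_op (Y i j)" and "F \<in> l2"
  shows "l2_norm (amp m Y F) \<le> mat_norm m Y * l2_norm F"
  unfolding mat_norm_def
  by (rule l2_norm_apply_le_op_norm[OF amp_scale[OF assms(1)] amp_bounded(2)[OF assms(1)] assms(2)])

definition smat_op :: "nat \<Rightarrow> (nat \<Rightarrow> nat \<Rightarrow> complex) \<Rightarrow> nat op" where
  "smat_op k a = (\<lambda>F i. if i < k then (\<Sum>j<k. a i j * F j) else 0)"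

lemma smat_norm_eq: "smat_norm k a = op_norm (smat_op k a)"
  by (simp add: smat_norm_def smat_op_def)

lemma smat_norm_cong: "(\<And>r c. r < k \<Longrightarrow> c < k \<Longrightarrow> a r c = b r c) \<Longrightarrow> smat_norm k a = smat_norm k b"
  unfolding smat_norm_def by (rule arg_cong[where f=op_norm]) (auto intro!: ext sum.cong)

lemma l2_norm_smat_op_le:
  assumes F: "F \<in> l2"
  shows "l2_norm (smat_op k a F) \<le> smat_norm k a * l2_norm F"
proof -
  define K where "K = (\<Sum>i<k. \<Sum>j<k. cmod (a i j))"
  have K0: "K \<ge> 0" unfolding K_def by (auto intro!: sum_nonneg)
  have bnd: "l2_norm (smat_op k a F) \<le> sqrt (real k) * K * l2_norm F" if F: "F \<in> l2" for F
  proof -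
    have pt: "cmod (smat_op k a F i) \<le> K * l2_norm F" if i: "i < k" for i
    proof -
      have "cmod (smat_op k a F i) \<le> (\<Sum>j<k. cmod (a i j) * l2_norm F)"
        using i by (auto simp: smat_op_def norm_mult intro!: order_trans[OF norm_sum] sum_mono
            mult_left_mono norm_le_l2_norm[OF F])
      also have "\<dots> \<le> K * l2_norm F"
        unfolding K_def sum_distrib_right[symmetric] using i
        by (intro mult_right_mono member_le_sum[where f="\<lambda>i. \<Sum>j<k. cmod (a i j)"])
           (auto intro: sum_nonneg l2_norm_nonneg)
      finally show ?thesis .
    qed
    have "l2_sqnorm (smat_op k a F) = (\<Sum>i<k. (cmod (smat_op k a F i))\<^sup>2)"
      by (rule l2_sqnorm_lessThan(2)) (simp add: smat_op_def)
    also have "\<dots> \<le> (\<Sum>i<k. (K * l2_norm F)\<^sup>2)" using pt by (intro sum_mono power_mono) auto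
    also have "\<dots> = (sqrt (real k) * K * l2_norm F)\<^sup>2" by (simp add: power_mult_distrib)
    finally show ?thesis using K0 by (subst l2_norm_le_iff) (auto simp: l2_norm_nonneg)
  qed
  show ?thesis unfolding smat_norm_eq
  proof (rule l2_norm_apply_le_op_norm[OF _ bnd F])
    show "smat_op k a (\<lambda>x. c * f x) = (\<lambda>x. c * smat_op k a f x)" for f c
      by (auto simp: smat_op_def sum_distrib_left mult_ac)
  qed
qed

lemma smat_norm_nonneg: "smat_norm k a \<ge> 0"
  using l2_norm_smat_op_le[OF l2_dirac, of k a 0] l2_norm_nonneg[of "smat_op k a (dirac 0)"]
  by (simp add: l2_norm_dirac)

lemma smat_norm_le_if_bilinear_le:
  assumes B: "B \<ge> 0"
    and bil: "\<And>p q. (\<And>i. i \<ge> k \<Longrightarrow> p i = 0) \<Longrightarrow> (\<And>i. i \<ge> k \<Longrightarrow> q i = 0) \<Longrightarrow>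
       cmod (\<Sum>r<k. \<Sum>c<k. cnj (p r) * a r c * q c) \<le> B * l2_norm p * l2_norm q"
  shows "smat_norm k a \<le> B"
  unfolding smat_norm_eq
proof (rule op_norm_le)
  fix F :: "nat \<Rightarrow> complex" assume F: "F \<in> l2" and F1: "l2_norm F \<le> 1"
  define z where "z = smat_op k a F"
  define v where "v j = (if j < k then F j else 0)" for j
  have z0: "z i = 0" if "i \<ge> k" for i using that by (simp add: z_def smat_op_def)
  have v0: "v i = 0" if "i \<ge> k" for i using that by (simp add: v_def)
  have "l2_sqnorm v = (\<Sum>j<k. (cmod (v j))\<^sup>2)" by (rule l2_sqnorm_lessThan(2)[OF v0])
  then have "l2_norm v = sqrt (\<Sum>j<k. (cmod (F j))\<^sup>2)" by (simp add: l2_norm_eq_sqrt v_def)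
  then have vn: "l2_norm v \<le> 1" using sqrt_sum_le_l2_norm[OF F finite_lessThan[of k]] F1 by linarith
  have "(\<Sum>i<k. cnj (z i) * z i) = (\<Sum>r<k. \<Sum>c<k. cnj (z r) * a r c * v c)"
    by (intro sum.cong refl) (simp add: z_def smat_op_def v_def sum_distrib_left mult.assoc)
  then have "cmod (\<Sum>i<k. cnj (z i) * z i) \<le> B * l2_norm z * l2_norm v"
    using bil[OF z0 v0] by simp
  also have "\<dots> \<le> l2_norm z * B"
    using mult_left_mono[OF vn, of "B * l2_norm z"] B by (simp add: l2_norm_nonneg mult.commute)
  finally have "cmod (\<Sum>i<k. cnj (z i) * z i) \<le> l2_norm z * B" .
  then have "l2_norm z \<le> B" using l2_norm_le_if_inner_le[of k z B] z0 B by blast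
  then show "l2_norm (smat_op k a F) \<le> B" by (simp add: z_def)
qed

definition vec_at :: "nat \<Rightarrow> ('a \<times> nat \<Rightarrow> complex) \<Rightarrow> 'a \<Rightarrow> nat \<Rightarrow> complex" where
  "vec_at n F h = (\<lambda>j. if j < n then F (h, j) else 0)"

lemma l2_norm_vec_at_power2: "(l2_norm (vec_at n F h))\<^sup>2 = (\<Sum>j<n. (cmod (F (h, j)))\<^sup>2)"
  using l2_sqnorm_lessThan(2)[of n "vec_at n F h"] by (simp add: vec_at_def l2_norm_power2)

lemma has_sum_amp_symbol:
  fixes Y :: "nat \<Rightarrow> nat \<Rightarrow> 'g::group_add op" and A :: "'g \<Rightarrow> nat \<Rightarrow> nat \<Rightarrow> complex"
  assumes Y: "\<And>i j. i < n \<Longrightarrow> j < n \<Longrightarrow> Y i j \<in> VN"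
    and symbol: "\<And>i j s. i < n \<Longrightarrow> j < n \<Longrightarrow> Y i j (dirac 0) s = of_real (w s) * A s i j"
    and F: "F \<in> l2" and i: "i < n"
  shows "((\<lambda>s. of_real (w s) * smat_op n (A s) (vec_at n F (- s + g)) i) has_sum amp n Y F (g, i)) UNIV"
proof -
  have "((\<lambda>s. of_real (w s) * (A s i j * F (- s + g, j))) has_sum Y i j (\<lambda>h. F (h, j)) g) UNIV"
    if j: "j < n" for j
    using VN_has_sum_conv[OF Y[OF i j] l2_slice[OF F], of g] by (simp add: symbol[OF i j] mult.assoc)
  then have "((\<lambda>s. \<Sum>j<n. of_real (w s) * (A s i j * F (- s + g, j)))
      has_sum (\<Sum>j<n. Y i j (\<lambda>h. F (h, j)) g)) UNIV"
    by (intro has_sum_sum) auto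
  then show ?thesis using i by (simp add: vec_at_def amp_apply smat_op_def sum_distrib_left)
qed

text \<open>Pointwise in \<open>g\<close>, a matrix of convolution operators with symbols \<open>w(s) A(s)\<close> acts like an
  average of the scalar matrices \<open>A(s)\<close> with weights \<open>w(s)\<close>; pair the row with itself to
  estimate it.\<close>

lemma l2_norm_vec_at_amp_le:
  fixes Y :: "nat \<Rightarrow> nat \<Rightarrow> 'g::group_add op" and A :: "'g \<Rightarrow> nat \<Rightarrow> nat \<Rightarrow> complex"
  assumes Y: "\<And>i j. i < n \<Longrightarrow> j < n \<Longrightarrow> Y i j \<in> VN"
    and symbol: "\<And>i j s. i < n \<Longrightarrow> j < n \<Longrightarrow> Y i j (dirac 0) s = of_real (w s) * A s i j"
    and w0: "\<And>s. w s \<ge> 0" and ws: "w summable_on UNIV"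
    and A: "\<And>s. smat_norm n (A s) \<le> L" and L: "L \<ge> 0" and F: "F \<in> l2"
  shows "l2_norm (vec_at n (amp n Y F) g)
      \<le> L * infsum (\<lambda>s. w s * l2_norm (vec_at n F (- s + g))) UNIV"
proof -
  define z where "z = vec_at n (amp n Y F) g"
  define u where "u h = l2_norm (vec_at n F h)" for h
  define v where "v s = smat_op n (A s) (vec_at n F (- s + g))" for s
  have z0: "z i = 0" if "i \<ge> n" for i using that by (simp add: z_def vec_at_def)
  have v0: "v s i = 0" if "i \<ge> n" for s i using that by (simp add: v_def smat_op_def)
  have u0: "u h \<ge> 0" for h by (simp add: u_def l2_norm_nonneg)
  have us: "(\<lambda>h. (u h)\<^sup>2) summable_on UNIV"
    unfolding u_def l2_norm_vec_at_power2 by (rule summable_on_slice_sums(1)[OF F]) simp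
  have vb: "l2_norm (v s) \<le> L * u (- s + g)" for s
  proof -
    have "vec_at n F (- s + g) \<in> l2" by (rule l2_sqnorm_lessThan(1)[of n]) (simp add: vec_at_def)
    from l2_norm_smat_op_le[OF this, of n "A s"] show ?thesis
      unfolding v_def u_def using A[of s] by (meson mult_right_mono l2_norm_nonneg order_trans)
  qed
  have hz: "((\<lambda>s. of_real (w s) * v s i) has_sum z i) UNIV" if i: "i < n" for i
    using has_sum_amp_symbol[OF Y symbol F i, where g=g] i by (simp add: z_def v_def vec_at_def)
  have "((\<lambda>s. \<Sum>i<n. cnj (z i) * (of_real (w s) * v s i)) has_sum (\<Sum>i<n. cnj (z i) * z i)) UNIV"
    by (intro has_sum_sum has_sum_cmult_right hz) auto
  then have "cmod (\<Sum>i<n. cnj (z i) * z i) \<le> infsum (\<lambda>s. l2_norm z * L * (w s * u (- s + g))) UNIV"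
  proof (rule cmod_has_sum_le)
    show "(\<lambda>s. l2_norm z * L * (w s * u (- s + g))) summable_on UNIV"
      by (rule summable_on_cmult_right[OF young_l1_l2(1)[OF w0 ws u0 us]])
    fix s
    have "cmod (\<Sum>i<n. cnj (z i) * v s i) \<le> l2_norm z * (L * u (- s + g))"
      by (rule order_trans[OF cmod_sum_cnj_mult_le[OF z0 v0] mult_left_mono[OF vb l2_norm_nonneg]])
    then have "w s * cmod (\<Sum>i<n. cnj (z i) * v s i) \<le> w s * (l2_norm z * (L * u (- s + g)))"
      by (rule mult_left_mono[OF _ w0])
    moreover have "(\<Sum>i<n. cnj (z i) * (of_real (w s) * v s i)) = of_real (w s) * (\<Sum>i<n. cnj (z i) * v s i)"
      by (simp add: sum_distrib_left mult.left_commute)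
    ultimately show "cmod (\<Sum>i<n. cnj (z i) * (of_real (w s) * v s i)) \<le> l2_norm z * L * (w s * u (- s + g))"
      using w0[of s] by (simp add: norm_mult mult_ac)
  qed
  also have "\<dots> = l2_norm z * (L * infsum (\<lambda>s. w s * u (- s + g)) UNIV)"
    by (simp add: infsum_cmult_right' mult.assoc)
  finally have "l2_norm z \<le> L * infsum (\<lambda>s. w s * u (- s + g)) UNIV"
    using l2_norm_le_if_inner_le[OF z0] L w0 u0 by (simp add: infsum_nonneg)
  then show ?thesis by (simp add: z_def u_def)
qed

lemma mat_norm_le_weighted:
  fixes Y :: "nat \<Rightarrow> nat \<Rightarrow> 'g::group_add op" and A :: "'g \<Rightarrow> nat \<Rightarrow> nat \<Rightarrow> complex"
  assumes Y: "\<And>i j. i < n \<Longrightarrow> j < n \<Longrightarrow> Y i j \<in> VN"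
    and symbol: "\<And>i j s. i < n \<Longrightarrow> j < n \<Longrightarrow> Y i j (dirac 0) s = of_real (w s) * A s i j"
    and w0: "\<And>s. w s \<ge> 0" and ws: "w summable_on UNIV"
    and A: "\<And>s. smat_norm n (A s) \<le> L" and L: "L \<ge> 0"
  shows "mat_norm n Y \<le> infsum w UNIV * L"
  unfolding mat_norm_def
proof (rule op_norm_le)
  fix F :: "'g \<times> nat \<Rightarrow> complex" assume F: "F \<in> l2" and F1: "l2_norm F \<le> 1"
  define W where "W = infsum w UNIV"
  define u where "u h = l2_norm (vec_at n F h)" for h
  define Phi where "Phi g = infsum (\<lambda>s. w s * u (- s + g)) UNIV" for g
  have W0: "W \<ge> 0" unfolding W_def using w0 by (intro infsum_nonneg) auto
  have u0: "u h \<ge> 0" for h by (simp add: u_def l2_norm_nonneg)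
  have u2: "(u h)\<^sup>2 = (\<Sum>j<n. (cmod (F (h, j)))\<^sup>2)" for h by (simp add: u_def l2_norm_vec_at_power2)
  have us: "(\<lambda>h. (u h)\<^sup>2) summable_on UNIV"
    unfolding u2 by (rule summable_on_slice_sums(1)[OF F]) simp
  note young = young_l1_l2[OF w0 ws u0 us]
  have row: "(\<Sum>i<n. (cmod (amp n Y F (g, i)))\<^sup>2) \<le> (L * Phi g)\<^sup>2" for g
  proof -
    have "(\<Sum>i<n. (cmod (amp n Y F (g, i)))\<^sup>2) = (l2_norm (vec_at n (amp n Y F) g))\<^sup>2"
      by (simp add: l2_norm_vec_at_power2)
    also have "\<dots> \<le> (L * Phi g)\<^sup>2"
      using l2_norm_vec_at_amp_le[OF Y symbol w0 ws A L F, of g]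
      by (intro power_mono) (auto simp: Phi_def u_def l2_norm_nonneg)
    finally show ?thesis .
  qed
  have "(\<lambda>g. (L * Phi g)\<^sup>2) summable_on UNIV"
    using young(2) by (simp add: Phi_def power_mult_distrib summable_on_cmult_right)
  from l2_sqnorm_le_by_rows[of n "amp n Y F", OF _ row this]
  have "l2_sqnorm (amp n Y F) \<le> infsum (\<lambda>g. (L * Phi g)\<^sup>2) UNIV" by (simp add: amp_apply)
  also have "\<dots> = L\<^sup>2 * infsum (\<lambda>g. (Phi g)\<^sup>2) UNIV"
    by (simp add: power_mult_distrib infsum_cmult_right')
  also have "\<dots> \<le> L\<^sup>2 * (W\<^sup>2 * infsum (\<lambda>h. (u h)\<^sup>2) UNIV)"
    using young(3) by (intro mult_left_mono) (auto simp: Phi_def W_def)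
  also have "\<dots> \<le> L\<^sup>2 * (W\<^sup>2 * 1)"
    using summable_on_slice_sums(2)[OF F, of "{..<n}"] F1 l2_norm_le_iff[of 1 F]
    by (intro mult_left_mono) (auto simp: u2)
  finally have "l2_sqnorm (amp n Y F) \<le> (W * L)\<^sup>2" by (simp add: power_mult_distrib mult.commute)
  then show "l2_norm (amp n Y F) \<le> infsum w UNIV * L"
    using W0 L by (simp add: W_def l2_norm_le_iff)
qed

section \<open>The norm of \<open>M\<^sub>n(L\<^sup>1(VN(G)))\<close>\<close>

lemma tau_comp_has_sum:
  assumes x: "x \<in> VN" and y: "y \<in> VN"
  shows "((\<lambda>s. x (dirac 0) s * y (dirac 0) (- s)) has_sum tau (x \<circ> y)) UNIV"
proof -
  have "((\<lambda>s. x (dirac 0) s * y (dirac 0) (- s + 0)) has_sum x (y (dirac 0)) 0) UNIV"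
    by (rule VN_has_sum_conv[OF x bounded_op_l2[OF VN_bounded_op[OF y] l2_dirac]])
  then show ?thesis by (simp add: tau_def delta_e_eq_dirac)
qed

text \<open>The functions on the left are the columns of \<open>[Y\<^sub>l\<^sub>k] (\<alpha>\<^sup>* \<otimes> \<delta>\<^sub>e)\<close>.\<close>

lemma sum_columns_sqnorm_le:
  fixes Y :: "nat \<Rightarrow> nat \<Rightarrow> 'g::group_add op" and \<alpha> :: "nat \<Rightarrow> complex"
  assumes Y: "\<And>k l. k < m \<Longrightarrow> l < m \<Longrightarrow> Y k l \<in> VN" and Yn: "mat_norm m (\<lambda>k l. Y l k) \<le> 1"
  shows "(\<Sum>l<m. (l2_norm (\<lambda>h. \<Sum>k<m. cnj (\<alpha> k) * Y k l (dirac 0) h))\<^sup>2) \<le> (\<Sum>k<m. (cmod (\<alpha> k))\<^sup>2)"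
proof -
  define Psi where "Psi p = (if snd p < m then cnj (\<alpha> (snd p)) * dirac 0 (fst p) else 0)"
    for p :: "'g \<times> nat"
  have "((\<lambda>p. (cmod (Psi p))\<^sup>2) has_sum (\<Sum>k<m. (cmod (\<alpha> k))\<^sup>2)) UNIV"
  proof (rule has_sum_finite_neutralI[of "{0} \<times> {..<m}"])
    show "(\<Sum>k<m. (cmod (\<alpha> k))\<^sup>2) = (\<Sum>p\<in>{0} \<times> {..<m}. (cmod (Psi p))\<^sup>2)"
      by (simp add: sum.cartesian_product' Psi_def dirac_def)
  qed (auto simp: Psi_def dirac_def)
  then have Psi: "Psi \<in> l2" "l2_sqnorm Psi = (\<Sum>k<m. (cmod (\<alpha> k))\<^sup>2)"
    by (auto simp: has_sum_iff mem_l2_iff l2_sqnorm_def)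
  have Yb: "bounded_op (Y l k)" if "k < m" "l < m" for k l using VN_bounded_op[OF Y] that by auto
  define Z where "Z = amp m (\<lambda>k l. Y l k) Psi"
  have Z: "Z \<in> l2" unfolding Z_def by (rule amp_bounded(1)[of m "\<lambda>k l. Y l k", OF Yb Psi(1)])
  have col: "Z (h, l) = (\<Sum>k<m. cnj (\<alpha> k) * Y k l (dirac 0) h)" if l: "l < m" for h l
  proof -
    have "Z (h, l) = (\<Sum>k<m. Y k l (\<lambda>h. Psi (h, k)) h)" using l by (simp add: Z_def amp_apply)
    also have "\<dots> = (\<Sum>k<m. cnj (\<alpha> k) * Y k l (dirac 0) h)"
    proof (rule sum.cong[OF refl])
      fix k assume k: "k \<in> {..<m}"
      have "(\<lambda>h. Psi (h, k)) = (\<lambda>h. cnj (\<alpha> k) * dirac 0 h)" using k by (simp add: Psi_def)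
      then show "Y k l (\<lambda>h. Psi (h, k)) h = cnj (\<alpha> k) * Y k l (dirac 0) h"
        using bounded_op_scale[OF VN_bounded_op[OF Y] l2_dirac, of k l "cnj (\<alpha> k)" 0] k l by simp
    qed
    finally show ?thesis .
  qed
  have "(\<Sum>l<m. (l2_norm (\<lambda>h. \<Sum>k<m. cnj (\<alpha> k) * Y k l (dirac 0) h))\<^sup>2)
      = (\<Sum>l<m. l2_sqnorm (\<lambda>h. Z (h, l)))"
    using col by (intro sum.cong) (auto simp: l2_norm_power2)
  also have "\<dots> \<le> (l2_norm Z)\<^sup>2" using sum_l2_sqnorm_slices_le[OF Z] by (simp add: l2_norm_power2)
  also have "\<dots> \<le> (l2_norm Psi)\<^sup>2"
  proof (intro power_mono)
    show "l2_norm Z \<le> l2_norm Psi"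
      using l2_norm_amp_le[of m "\<lambda>k l. Y l k", OF Yb Psi(1)] mult_right_mono[OF Yn l2_norm_nonneg[of Psi]]
      by (simp add: Z_def)
  qed (simp add: l2_norm_nonneg)
  finally show ?thesis by (simp add: l2_norm_power2 Psi(2))
qed

text \<open>This is where the trace enters: \<open>\<tau>(x y) = \<Sum>\<^sub>s x\<^sub>s y\<^sub>-\<^sub>s\<close> in terms of symbols, so the pairing
  of \<open>x\<close> against operators in \<open>VN\<close> is controlled by the \<open>\<ell>\<^sup>2\<close>-norm of the symbol of \<open>x\<close>.\<close>

lemma cmod_sum_tau_le:
  fixes x :: "'g::group_add op" and Y :: "nat \<Rightarrow> 'g op" and \<alpha> :: "nat \<Rightarrow> complex"
  assumes x: "x \<in> VN" and Y: "\<And>k. k < m \<Longrightarrow> Y k \<in> VN"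
  shows "cmod (\<Sum>k<m. cnj (\<alpha> k) * tau (x \<circ> Y k))
    \<le> l2_norm (x (dirac 0)) * l2_norm (\<lambda>h. \<Sum>k<m. cnj (\<alpha> k) * Y k (dirac 0) h)"
proof -
  define a where "a = x (dirac 0)"
  define col where "col = (\<lambda>h. \<Sum>k<m. cnj (\<alpha> k) * Y k (dirac 0) h)"
  have a: "a \<in> l2" unfolding a_def by (rule bounded_op_l2[OF VN_bounded_op[OF x] l2_dirac])
  have col: "col \<in> l2"
    unfolding col_def by (intro l2_sum bounded_op_l2[OF VN_bounded_op[OF Y] l2_dirac]) auto
  have "((\<lambda>s. \<Sum>k<m. cnj (\<alpha> k) * (a s * Y k (dirac 0) (- s)))
      has_sum (\<Sum>k<m. cnj (\<alpha> k) * tau (x \<circ> Y k))) UNIV"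
    using tau_comp_has_sum[OF x Y] by (intro has_sum_sum has_sum_cmult_right) (auto simp: a_def)
  moreover have "(\<Sum>k<m. cnj (\<alpha> k) * (a s * Y k (dirac 0) (- s))) = a s * col (- s)" for s
    by (simp add: col_def sum_distrib_left mult_ac)
  ultimately have "(\<Sum>k<m. cnj (\<alpha> k) * tau (x \<circ> Y k)) = infsum (\<lambda>s. a s * col (- s)) UNIV"
    by (simp add: has_sum_iff)
  also have "cmod \<dots> \<le> l2_norm a * l2_norm (\<lambda>s. col (- s))"
    by (rule l2_mult_summable_and_bound(2)[OF a l2_reindex_bij(1)[OF bij_uminus col]])
  finally show ?thesis using l2_reindex_bij(2)[OF bij_uminus col] by (simp add: a_def col_def)
qed

lemma cmod_pairing_le:
  fixes x :: "'g::group_add op" and Y :: "nat \<Rightarrow> nat \<Rightarrow> 'g op" and \<alpha> \<beta> :: "nat \<Rightarrow> complex"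
  assumes x: "x \<in> VN" and Y: "\<And>k l. k < m \<Longrightarrow> l < m \<Longrightarrow> Y k l \<in> VN"
    and Yn: "mat_norm m (\<lambda>k l. Y l k) \<le> 1"
  shows "cmod (\<Sum>k<m. \<Sum>l<m. cnj (\<alpha> k) * tau (x \<circ> Y k l) * \<beta> l)
     \<le> l2_norm (x (dirac 0)) * sqrt (\<Sum>k<m. (cmod (\<alpha> k))\<^sup>2) * sqrt (\<Sum>l<m. (cmod (\<beta> l))\<^sup>2)"
proof -
  define a where "a = x (dirac 0)"
  define col where "col l = (\<lambda>h. \<Sum>k<m. cnj (\<alpha> k) * Y k l (dirac 0) h)" for l
  have T: "cmod (\<Sum>k<m. cnj (\<alpha> k) * tau (x \<circ> Y k l)) \<le> l2_norm a * l2_norm (col l)"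
    if "l < m" for l
    unfolding a_def col_def using that by (intro cmod_sum_tau_le[OF x]) (rule Y)
  have "(\<Sum>k<m. \<Sum>l<m. cnj (\<alpha> k) * tau (x \<circ> Y k l) * \<beta> l)
      = (\<Sum>l<m. (\<Sum>k<m. cnj (\<alpha> k) * tau (x \<circ> Y k l)) * \<beta> l)"
    by (subst sum.swap) (simp add: sum_distrib_right)
  then have "cmod (\<Sum>k<m. \<Sum>l<m. cnj (\<alpha> k) * tau (x \<circ> Y k l) * \<beta> l)
      \<le> (\<Sum>l<m. cmod ((\<Sum>k<m. cnj (\<alpha> k) * tau (x \<circ> Y k l)) * \<beta> l))"
    by (simp only: norm_sum)
  also have "\<dots> \<le> (\<Sum>l<m. l2_norm a * l2_norm (col l) * cmod (\<beta> l))"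
  proof (rule sum_mono)
    fix l assume "l \<in> {..<m}"
    then show "cmod ((\<Sum>k<m. cnj (\<alpha> k) * tau (x \<circ> Y k l)) * \<beta> l)
        \<le> l2_norm a * l2_norm (col l) * cmod (\<beta> l)"
      unfolding norm_mult by (intro mult_right_mono T) auto
  qed
  also have "\<dots> = l2_norm a * (\<Sum>l<m. l2_norm (col l) * cmod (\<beta> l))"
    by (simp add: sum_distrib_left mult.assoc)
  also have "\<dots> \<le> l2_norm a * (sqrt (\<Sum>l<m. (l2_norm (col l))\<^sup>2) * sqrt (\<Sum>l<m. (cmod (\<beta> l))\<^sup>2))"
    by (intro mult_left_mono sum_mult_le_sqrt) (auto simp: l2_norm_nonneg)
  also have "\<dots> \<le> l2_norm a * (sqrt (\<Sum>k<m. (cmod (\<alpha> k))\<^sup>2) * sqrt (\<Sum>l<m. (cmod (\<beta> l))\<^sup>2))"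
    using sum_columns_sqnorm_le[OF Y Yn, of \<alpha>]
    by (intro mult_left_mono mult_right_mono real_sqrt_le_mono)
       (auto simp: col_def l2_norm_nonneg intro: sum_nonneg)
  finally show ?thesis by (simp add: a_def mult.assoc)
qed

lemma sum_lessThan_mult: "(\<Sum>r<m * n. f r) = (\<Sum>k<m. \<Sum>i<n. f (k * n + i))"
  for f :: "nat \<Rightarrow> 'a::comm_monoid_add"
proof (induction m)
  case (Suc m)
  have "(\<Sum>r<m * n + b. f r) = (\<Sum>r<m * n. f r) + (\<Sum>i<b. f (m * n + i))" for b
    by (induction b) (simp_all add: add.assoc)
  from this[of n] show ?case using Suc by (simp add: add.commute)
qed simp

lemma sum_sum_lessThan_mult:
  fixes F :: "nat \<Rightarrow> nat \<Rightarrow> 'a::comm_monoid_add"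
  shows "(\<Sum>r<m * n. \<Sum>c<m * n. F r c) = (\<Sum>i<n. \<Sum>j<n. \<Sum>k<m. \<Sum>l<m. F (k * n + i) (l * n + j))"
proof -
  have "(\<Sum>r<m * n. \<Sum>c<m * n. F r c) = (\<Sum>k<m. \<Sum>i<n. \<Sum>l<m. \<Sum>j<n. F (k * n + i) (l * n + j))"
    by (simp add: sum_lessThan_mult)
  also have "\<dots> = (\<Sum>i<n. \<Sum>k<m. \<Sum>l<m. \<Sum>j<n. F (k * n + i) (l * n + j))" by (rule sum.swap)
  also have "\<dots> = (\<Sum>i<n. \<Sum>k<m. \<Sum>j<n. \<Sum>l<m. F (k * n + i) (l * n + j))"
    by (rule sum.cong[OF refl], rule sum.cong[OF refl], rule sum.swap)
  also have "\<dots> = (\<Sum>i<n. \<Sum>j<n. \<Sum>k<m. \<Sum>l<m. F (k * n + i) (l * n + j))"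
    by (rule sum.cong[OF refl], rule sum.swap)
  finally show ?thesis .
qed

lemma sqrt_sum_stride_le_l2_norm:
  fixes f :: "nat \<Rightarrow> complex"
  assumes f: "f \<in> l2" and i: "i < n"
  shows "sqrt (\<Sum>k<m. (cmod (f (k * n + i)))\<^sup>2) \<le> l2_norm f"
proof -
  have "inj_on (\<lambda>k. k * n + i) {..<m}" using i by (auto intro!: inj_onI)
  then have "(\<Sum>k<m. (cmod (f (k * n + i)))\<^sup>2) = (\<Sum>r\<in>(\<lambda>k. k * n + i) ` {..<m}. (cmod (f r))\<^sup>2)"
    by (simp add: sum.reindex)
  then show ?thesis using sqrt_sum_le_l2_norm[OF f, of "(\<lambda>k. k * n + i) ` {..<m}"] by simp
qed

lemma smat_norm_pairing_le:
  fixes X Y :: "nat \<Rightarrow> nat \<Rightarrow> 'g::group_add op"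
  assumes X: "\<And>i j. i < n \<Longrightarrow> j < n \<Longrightarrow> X i j \<in> VN"
    and Y: "\<And>k l. k < m \<Longrightarrow> l < m \<Longrightarrow> Y k l \<in> VN" and Yn: "mat_norm m (\<lambda>k l. Y l k) \<le> 1"
  shows "smat_norm (m * n) (\<lambda>r c. tau (X (r mod n) (c mod n) \<circ> Y (r div n) (c div n)))
     \<le> (\<Sum>i<n. \<Sum>j<n. l2_norm (X i j (dirac 0)))"
proof (rule smat_norm_le_if_bilinear_le)
  fix p q :: "nat \<Rightarrow> complex"
  assume p0: "\<And>i. i \<ge> m * n \<Longrightarrow> p i = 0" and q0: "\<And>i. i \<ge> m * n \<Longrightarrow> q i = 0"
  have pl2: "p \<in> l2" by (rule l2_sqnorm_lessThan(1)[of "m * n" p, OF p0])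
  have ql2: "q \<in> l2" by (rule l2_sqnorm_lessThan(1)[of "m * n" q, OF q0])
  define b where "b i j = (\<Sum>k<m. \<Sum>l<m. cnj (p (k * n + i)) * tau (X i j \<circ> Y k l) * q (l * n + j))"
    for i j
  have e: "(\<Sum>r<m * n. \<Sum>c<m * n. cnj (p r) * tau (X (r mod n) (c mod n) \<circ> Y (r div n) (c div n)) * q c)
      = (\<Sum>i<n. \<Sum>j<n. b i j)"
    by (simp add: sum_sum_lessThan_mult b_def)
  have bnd: "cmod (b i j) \<le> l2_norm (X i j (dirac 0)) * l2_norm p * l2_norm q" if ij: "i < n" "j < n" for i j
  proof -
    have "cmod (b i j) \<le> l2_norm (X i j (dirac 0)) * sqrt (\<Sum>k<m. (cmod (p (k * n + i)))\<^sup>2)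
        * sqrt (\<Sum>l<m. (cmod (q (l * n + j)))\<^sup>2)"
      unfolding b_def by (rule cmod_pairing_le[OF X[OF ij] Y Yn])
    also have "\<dots> \<le> l2_norm (X i j (dirac 0)) * l2_norm p * l2_norm q"
      using sqrt_sum_stride_le_l2_norm[OF pl2 ij(1)] sqrt_sum_stride_le_l2_norm[OF ql2 ij(2)] by (intro mult_mono) (auto simp: l2_norm_nonneg sum_nonneg)
    finally show ?thesis .
  qed
  have "cmod (\<Sum>i<n. \<Sum>j<n. b i j) \<le> (\<Sum>i<n. \<Sum>j<n. cmod (b i j))"
    by (rule order_trans[OF norm_sum sum_mono[OF norm_sum]])
  also have "\<dots> \<le> (\<Sum>i<n. \<Sum>j<n. l2_norm (X i j (dirac 0)) * l2_norm p * l2_norm q)"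
    using bnd by (intro sum_mono) auto
  finally show "cmod (\<Sum>r<m * n. \<Sum>c<m * n. cnj (p r) * tau (X (r mod n) (c mod n) \<circ> Y (r div n) (c div n)) * q c)
     \<le> (\<Sum>i<n. \<Sum>j<n. l2_norm (X i j (dirac 0))) * l2_norm p * l2_norm q"
    unfolding e by (simp add: sum_distrib_right)
qed (auto intro!: sum_nonneg simp: l2_norm_nonneg)

lemma l2_norm_lam: "f \<in> l2 \<Longrightarrow> l2_norm (lam s f) = l2_norm f"
  using l2_reindex_bij(2)[OF bij_plus[of "- s"]] by (simp add: lam_def)

lemma mat_norm_lam: "mat_norm 1 (\<lambda>k l. lam s) \<le> 1"
  unfolding mat_norm_def
proof (rule op_norm_le)
  fix F :: "'a \<times> nat \<Rightarrow> complex" assume F: "F \<in> l2" and F1: "l2_norm F \<le> 1"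
  define F0 where "F0 = (\<lambda>h. F (h, 0))"
  have F0: "F0 \<in> l2" unfolding F0_def by (rule l2_slice[OF F])
  have "l2_sqnorm (amp 1 (\<lambda>k l. lam s) F) \<le> infsum (\<lambda>g. (cmod (lam s F0 g))\<^sup>2) UNIV"
    by (rule l2_sqnorm_le_by_rows(2)[of 1])
       (use l2_lam[OF F0] in \<open>auto simp: amp_apply F0_def mem_l2_iff\<close>)
  also have "\<dots> = (l2_norm (lam s F0))\<^sup>2" by (simp add: l2_norm_power2 l2_sqnorm_def)
  also have "\<dots> = (l2_norm F0)\<^sup>2" by (simp add: l2_norm_lam[OF F0])
  also have "\<dots> \<le> l2_sqnorm F"
    using sum_l2_sqnorm_slices_le[OF F, of "{0}"] by (simp add: F0_def l2_norm_power2)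
  also have "\<dots> \<le> 1\<^sup>2" using F1 l2_norm_le_iff[of 1 F] by simp
  finally show "l2_norm (amp 1 (\<lambda>k l. lam s) F) \<le> 1" by (subst l2_norm_le_iff) auto
qed

lemma smat_norm_symbol_le_L1_mat_norm:
  fixes X :: "nat \<Rightarrow> nat \<Rightarrow> 'g::group_add op"
  assumes X: "\<And>i j. i < n \<Longrightarrow> j < n \<Longrightarrow> X i j \<in> VN"
  shows "smat_norm n (\<lambda>i j. X i j (dirac 0) s) \<le> L1_mat_norm n X"
proof -
  define S where "S = {smat_norm (m * n) (\<lambda>r c. tau (X (r mod n) (c mod n) \<circ> Y (r div n) (c div n))) | m Y.
        (\<forall>k<m. \<forall>l<m. Y k l \<in> VN) \<and> mat_norm m (\<lambda>k l. Y l k) \<le> 1}"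
  have bdd: "bdd_above S"
  proof (rule bdd_aboveI[where M="\<Sum>i<n. \<Sum>j<n. l2_norm (X i j (dirac 0))"])
    fix y assume "y \<in> S"
    then obtain m Y where y: "y = smat_norm (m * n) (\<lambda>r c. tau (X (r mod n) (c mod n) \<circ> Y (r div n) (c div n)))"
      and Y: "\<forall>k<m. \<forall>l<m. Y k l \<in> VN" and Yn: "mat_norm m (\<lambda>k l. Y l k) \<le> 1"
      unfolding S_def by blast
    show "y \<le> (\<Sum>i<n. \<Sum>j<n. l2_norm (X i j (dirac 0)))"
      unfolding y by (rule smat_norm_pairing_le[OF X _ Yn]) (use Y in auto)
  qed
  have mem: "smat_norm (1 * n) (\<lambda>r c. tau (X (r mod n) (c mod n) \<circ> (\<lambda>k l. lam (- s)) (r div n) (c div n))) \<in> S"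
    unfolding S_def
  proof (rule CollectI, intro exI conjI)
    show "\<forall>k<1. \<forall>l<1. lam (- s) \<in> VN" by (simp add: lam_in_VN)
    show "mat_norm 1 (\<lambda>k l. lam (- s)) \<le> 1" by (rule mat_norm_lam)
  qed (rule refl)
  have eq: "smat_norm (1 * n) (\<lambda>r c. tau (X (r mod n) (c mod n) \<circ> (\<lambda>k l. lam (- s)) (r div n) (c div n)))
      = smat_norm n (\<lambda>i j. X i j (dirac 0) s)"
  proof (simp only: mult_1, rule smat_norm_cong)
    fix r c assume r: "r < n" and c: "c < n"
    have "lam (- s) delta_e = dirac (- s)" by (auto simp: lam_def delta_e_def dirac_def add_eq_0_iff2)
    then show "tau (X (r mod n) (c mod n) \<circ> lam (- s)) = X r c (dirac 0) s"
      using r c by (simp add: tau_def VN_apply_dirac[OF X[OF r c], of "- s"])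
  qed
  have "L1_mat_norm n X = Sup S" by (simp add: L1_mat_norm_def S_def)
  then show ?thesis using cSup_upper[OF mem bdd] eq by simp
qed

lemma L1_mat_norm_nonneg:
  "(\<And>i j. i < n \<Longrightarrow> j < n \<Longrightarrow> X i j \<in> VN) \<Longrightarrow> L1_mat_norm n X \<ge> 0"
  using smat_norm_symbol_le_L1_mat_norm smat_norm_nonneg order_trans by blast

lemma mat_norm_fourier_mult_le:
  fixes psi :: "'g::group_add \<Rightarrow> real" and X :: "nat \<Rightarrow> nat \<Rightarrow> 'g op"
  assumes X: "\<And>i j. i < n \<Longrightarrow> j < n \<Longrightarrow> X i j \<in> VN"
    and summable: "(\<lambda>s. exp (- t * psi s)) summable_on UNIV"
  shows "mat_norm n (\<lambda>i j. fourier_mult psi t (X i j))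
    \<le> infsum (\<lambda>s. exp (- t * psi s)) UNIV * L1_mat_norm n X"
proof (rule mat_norm_le_weighted[where A="\<lambda>s i j. X i j (dirac 0) s"])
  show "fourier_mult psi t (X i j) \<in> VN" if "i < n" "j < n" for i j
    by (rule fourier_mult_symbol(1)[OF X[OF that] summable])
  show "fourier_mult psi t (X i j) (dirac 0) s = of_real (exp (- t * psi s)) * X i j (dirac 0) s"
    if "i < n" "j < n" for i j s
    by (rule fourier_mult_symbol(2)[OF X[OF that] summable])
  show "smat_norm n (\<lambda>i j. X i j (dirac 0) s) \<le> L1_mat_norm n X" for s
    by (rule smat_norm_symbol_le_L1_mat_norm[OF X])
qed (use summable L1_mat_norm_nonneg[OF X] in auto)

section \<open>Counting and Gaussian sums\<close>

lemma summable_poly_times_gaussian: "summable (\<lambda>j::nat. (real j + 2) ^ d * exp (- (real j)\<^sup>2))"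
proof (rule summable_comparison_test'[where N="d + 1"])
  show "summable (\<lambda>j::nat. (4::real) ^ d * exp (- 1) ^ j)"
    by (rule summable_mult, rule summable_geometric) simp
  fix j :: nat assume j: "j \<ge> d + 1"
  have "j + 2 < 2 ^ (j + 2)" by (rule less_exp)
  then have "real j + 2 \<le> 2 ^ (j + 2)" by (metis of_nat_add of_nat_numeral of_nat_power of_nat_le_iff less_imp_le)
  also have "(2::real) ^ (j + 2) = 4 * 2 ^ j" by (simp add: power_add)
  also have "\<dots> \<le> 4 * exp 1 ^ j"
    using power_mono[of "2::real" "exp 1" j] exp_ge_add_one_self[of 1] by simp
  finally have "(real j + 2) ^ d \<le> (4 * exp 1 ^ j) ^ d" by (rule power_mono) simp
  also have "\<dots> = 4 ^ d * exp (real (j * d))"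
    by (simp add: power_mult_distrib exp_of_nat_mult[symmetric] power_mult)
  finally have poly: "(real j + 2) ^ d \<le> 4 ^ d * exp (real (j * d))" .
  have "real (j * d) \<le> real (j * (j - 1))" using j by simp
  then have "real (j * d) - (real j)\<^sup>2 \<le> - real j" using j by (simp add: power2_eq_square of_nat_diff algebra_simps)
  then have gauss: "exp (real (j * d)) * exp (- (real j)\<^sup>2) \<le> exp (- 1) ^ j"
    by (simp add: exp_add[symmetric] exp_of_nat_mult[symmetric])
  have "norm ((real j + 2) ^ d * exp (- (real j)\<^sup>2)) \<le> 4 ^ d * exp (real (j * d)) * exp (- (real j)\<^sup>2)"
    using poly by (simp add: mult_right_mono)
  also have "\<dots> \<le> 4 ^ d * exp (- 1) ^ j" using gauss by (simp add: mult.assoc)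
  finally show "norm ((real j + 2) ^ d * exp (- (real j)\<^sup>2)) \<le> 4 ^ d * exp (- 1) ^ j" .
qed

lemma sum_shell_le:
  fixes r :: "'a \<Rightarrow> real"
  assumes r0: "\<And>s. r s \<ge> 0" and c: "c > 0"
    and count: "\<And>R. R \<ge> 0 \<Longrightarrow> finite {s. r s \<le> R} \<and> real (card {s. r s \<le> R}) \<le> c * (1 + R) ^ d"
    and \<sigma>: "0 < \<sigma>" "\<sigma> \<le> 1"
  shows "(\<Sum>s\<in>{s\<in>F. nat \<lfloor>\<sigma> * r s\<rfloor> = j}. exp (- (\<sigma> * r s)\<^sup>2))
      \<le> c / \<sigma> ^ d * ((real j + 2) ^ d * exp (- (real j)\<^sup>2))"
proof -
  define S where "S = {s\<in>F. nat \<lfloor>\<sigma> * r s\<rfloor> = j}"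
  have "\<lfloor>\<sigma> * r s\<rfloor> = int j" if "s \<in> S" for s
    using that r0[of s] \<sigma> by (auto simp: S_def nat_eq_iff)
  then have lo: "real j \<le> \<sigma> * r s" and hi: "\<sigma> * r s < real j + 1" if "s \<in> S" for s
    using that floor_eq_iff[of "\<sigma> * r s" "int j"] by auto
  have R0: "(real j + 1) / \<sigma> \<ge> 0" using \<sigma> by simp
  have "S \<subseteq> {s. r s \<le> (real j + 1) / \<sigma>}" using hi \<sigma> by (auto simp: field_simps less_imp_le)
  then have "real (card S) \<le> c * (1 + (real j + 1) / \<sigma>) ^ d"
    using count[OF R0] card_mono by (meson of_nat_le_iff order_trans)
  also have "\<dots> \<le> c * ((real j + 2) / \<sigma>) ^ d"
    using \<sigma> c by (intro mult_left_mono power_mono) (auto simp: field_simps)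
  finally have card: "real (card S) \<le> c / \<sigma> ^ d * (real j + 2) ^ d" by (simp add: power_divide)
  have "exp (- (\<sigma> * r s)\<^sup>2) \<le> exp (- (real j)\<^sup>2)" if "s \<in> S" for s
    using lo[OF that] by (simp add: power_mono)
  then have "(\<Sum>s\<in>S. exp (- (\<sigma> * r s)\<^sup>2)) \<le> real (card S) * exp (- (real j)\<^sup>2)"
    using sum_bounded_above[of S "\<lambda>s. exp (- (\<sigma> * r s)\<^sup>2)"] by simp
  also have "\<dots> \<le> c / \<sigma> ^ d * (real j + 2) ^ d * exp (- (real j)\<^sup>2)"
    by (rule mult_right_mono[OF card]) simp
  finally show ?thesis by (simp add: S_def mult.assoc)
qed

text \<open>Group the terms in shells \<open>j \<le> \<sqrt>t r(s) < j + 1\<close>: the \<open>j\<close>-th shell has \<open>O((j + 2)\<^sup>d / t\<^sup>d\<^sup>/\<^sup>2)\<close>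
  elements, each contributing at most \<open>exp (- j\<^sup>2)\<close>.\<close>

lemma gaussian_sum_le:
  fixes r :: "'a \<Rightarrow> real"
  assumes r0: "\<And>s. r s \<ge> 0" and c: "c > 0"
    and count: "\<And>R. R \<ge> 0 \<Longrightarrow> finite {s. r s \<le> R} \<and> real (card {s. r s \<le> R}) \<le> c * (1 + R) ^ d"
  obtains C where "C > 0" and "\<And>t. 0 < t \<Longrightarrow> t \<le> 1 \<Longrightarrow>
      (\<lambda>s. exp (- t * (r s)\<^sup>2)) summable_on UNIV \<and>
      infsum (\<lambda>s. exp (- t * (r s)\<^sup>2)) UNIV \<le> C / t powr (real d / 2)"
proof
  define g where "g j = (real j + 2) ^ d * exp (- (real j)\<^sup>2)" for j :: nat
  have gs: "summable g" unfolding g_def by (rule summable_poly_times_gaussian)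
  have "0 < g 0" by (simp add: g_def)
  also have "g 0 \<le> suminf g" using sum_le_suminf[OF gs, of "{0}"] by (simp add: g_def)
  finally show "c * suminf g > 0" using c by simp
  fix t :: real assume t: "0 < t" "t \<le> 1"
  define \<sigma> where "\<sigma> = sqrt t"
  have \<sigma>: "0 < \<sigma>" "\<sigma> \<le> 1" using t by (auto simp: \<sigma>_def)
  have \<sigma>d: "\<sigma> ^ d = t powr (real d / 2)"
    using t by (simp add: \<sigma>_def powr_half_sqrt[symmetric] powr_realpow[symmetric] powr_powr)
  have f: "exp (- t * (r s)\<^sup>2) = exp (- (\<sigma> * r s)\<^sup>2)" for s
    using t by (simp add: \<sigma>_def power_mult_distrib)
  have "(\<Sum>s\<in>F. exp (- t * (r s)\<^sup>2)) \<le> c * suminf g / t powr (real d / 2)" if F: "finite F" for F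
  proof -
    have "(\<Sum>s\<in>F. exp (- t * (r s)\<^sup>2))
        = (\<Sum>j\<in>(\<lambda>s. nat \<lfloor>\<sigma> * r s\<rfloor>) ` F. \<Sum>s\<in>{s\<in>F. nat \<lfloor>\<sigma> * r s\<rfloor> = j}. exp (- (\<sigma> * r s)\<^sup>2))"
      unfolding f by (rule sum.image_gen[OF F])
    also have "\<dots> \<le> (\<Sum>j\<in>(\<lambda>s. nat \<lfloor>\<sigma> * r s\<rfloor>) ` F. c / \<sigma> ^ d * g j)"
      unfolding g_def by (intro sum_mono sum_shell_le[OF r0 c count \<sigma>])
    also have "\<dots> \<le> c / \<sigma> ^ d * suminf g"
      unfolding sum_distrib_left[symmetric] using F c \<sigma>
      by (intro mult_left_mono sum_le_suminf[OF gs]) (auto simp: g_def)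
    finally show ?thesis using \<sigma>d by simp
  qed
  then show "(\<lambda>s. exp (- t * (r s)\<^sup>2)) summable_on UNIV \<and>
      infsum (\<lambda>s. exp (- t * (r s)\<^sup>2)) UNIV \<le> c * suminf g / t powr (real d / 2)"
    using nonneg_summable_on_finite_sums_le[of UNIV "\<lambda>s. exp (- t * (r s)\<^sup>2)"] by auto
qed

lemma norm_power2_eq_sum_inner:
  fixes B :: "'a::euclidean_space set"
  assumes orth: "pairwise orthogonal B" and B1: "\<And>e. e \<in> B \<Longrightarrow> norm e = 1" and a: "a \<in> span B"
  shows "(norm a)\<^sup>2 = (\<Sum>e\<in>B. (a \<bullet> e)\<^sup>2)"
proof -
  have ee: "e \<bullet> e = 1" if "e \<in> B" for e using B1[OF that] by (metis power2_norm_eq_inner power_one)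
  define r where "r = a - (\<Sum>e\<in>B. (e \<bullet> a / (e \<bullet> e)) *\<^sub>R e)"
  have "r \<in> span B" unfolding r_def by (intro span_diff a span_sum span_mul span_base)
  then have "orthogonal r r" using Gram_Schmidt_step[OF orth, of r a] by (simp add: r_def)
  then have "a = (\<Sum>e\<in>B. (e \<bullet> a / (e \<bullet> e)) *\<^sub>R e)" by (simp add: r_def orthogonal_def)
  also have "\<dots> = (\<Sum>e\<in>B. (e \<bullet> a) *\<^sub>R e)" by (intro sum.cong refl) (simp add: ee)
  finally have ae: "a = (\<Sum>e\<in>B. (e \<bullet> a) *\<^sub>R e)" .
  have "(norm a)\<^sup>2 = a \<bullet> a" by (rule power2_norm_eq_inner)
  also have "\<dots> = a \<bullet> (\<Sum>e\<in>B. (e \<bullet> a) *\<^sub>R e)" by (subst (2) ae) (rule refl)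
  also have "\<dots> = (\<Sum>e\<in>B. (a \<bullet> e)\<^sup>2)" by (simp add: inner_sum_right inner_commute power2_eq_square)
  finally show ?thesis .
qed

lemma power2_diff_le_if_floor_eq:
  fixes x y \<epsilon> :: real
  assumes "\<lfloor>x / \<epsilon>\<rfloor> = \<lfloor>y / \<epsilon>\<rfloor>" and "\<epsilon> > 0"
  shows "(x - y)\<^sup>2 \<le> \<epsilon>\<^sup>2"
proof -
  have "\<bar>x / \<epsilon> - y / \<epsilon>\<bar> < 1" using assms(1) floor_correct[of "x / \<epsilon>"] floor_correct[of "y / \<epsilon>"] by linarith
  then have "\<bar>x - y\<bar> \<le> \<epsilon>" using assms(2) by (simp add: diff_divide_distrib[symmetric] field_simps)
  then show ?thesis using power_mono[of "\<bar>x - y\<bar>" \<epsilon> 2] by simp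
qed

lemma power2_norm_diff_le_if_same_cell:
  fixes u v :: "'a::euclidean_space"
  assumes B: "pairwise orthogonal B" "\<And>e. e \<in> B \<Longrightarrow> norm e = 1" and uv: "u \<in> span B" "v \<in> span B"
    and \<epsilon>: "\<epsilon> > 0" and cell: "\<And>e. e \<in> B \<Longrightarrow> \<lfloor>(u \<bullet> e) / \<epsilon>\<rfloor> = \<lfloor>(v \<bullet> e) / \<epsilon>\<rfloor>"
  shows "(norm (u - v))\<^sup>2 \<le> real (card B) * \<epsilon>\<^sup>2"
proof -
  have "(norm (u - v))\<^sup>2 = (\<Sum>e\<in>B. ((u - v) \<bullet> e)\<^sup>2)"
    by (rule norm_power2_eq_sum_inner[OF B span_diff[OF uv]])
  also have "\<dots> \<le> real (card B) * \<epsilon>\<^sup>2"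
  proof (rule sum_bounded_above)
    fix e assume "e \<in> B"
    then show "((u - v) \<bullet> e)\<^sup>2 \<le> \<epsilon>\<^sup>2"
      using power2_diff_le_if_floor_eq[OF cell \<epsilon>] by (simp add: inner_diff_left)
  qed
  finally show ?thesis .
qed

lemma floor_divide_in_box:
  fixes x R \<epsilon> :: real
  assumes "\<bar>x\<bar> \<le> R" and "\<epsilon> > 0"
  shows "\<lfloor>x / \<epsilon>\<rfloor> \<in> {-\<lceil>R / \<epsilon>\<rceil>..\<lceil>R / \<epsilon>\<rceil>}"
proof -
  have lo: "- (R / \<epsilon>) \<le> x / \<epsilon>" and up: "x / \<epsilon> \<le> R / \<epsilon>" using assms by (auto simp: field_simps)
  have "\<lfloor>x / \<epsilon>\<rfloor> \<le> \<lceil>R / \<epsilon>\<rceil>" using floor_mono[OF up] floor_le_ceiling[of "R / \<epsilon>"] by linarith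
  moreover have "- \<lceil>R / \<epsilon>\<rceil> \<le> \<lfloor>x / \<epsilon>\<rfloor>" using floor_mono[OF lo] unfolding floor_minus by linarith
  ultimately show ?thesis by simp
qed

lemma card_box_le:
  fixes R \<epsilon> :: real
  assumes B: "finite B" and R: "R \<ge> 0" and \<epsilon>: "\<epsilon> > 0"
  shows "real (card (\<Pi>\<^sub>E e\<in>B. {-\<lceil>R / \<epsilon>\<rceil>..\<lceil>R / \<epsilon>\<rceil>})) \<le> ((2 / \<epsilon> + 3) * (1 + R)) ^ card B"
proof -
  define M where "M = \<lceil>R / \<epsilon>\<rceil>"
  have "R / \<epsilon> \<ge> 0" using R \<epsilon> by simp
  then have "M \<ge> 0" unfolding M_def by linarith
  then have "real (nat (2 * M + 1)) = 2 * of_int M + 1" by simp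
  also have "\<dots> \<le> 2 * (R / \<epsilon> + 1) + 1" using ceiling_correct[of "R / \<epsilon>"] by (simp add: M_def)
  also have "\<dots> \<le> (2 / \<epsilon> + 3) * (1 + R)" using R \<epsilon> by (simp add: field_simps)
  finally have side: "real (nat (2 * M + 1)) \<le> (2 / \<epsilon> + 3) * (1 + R)" .
  have "card (\<Pi>\<^sub>E e\<in>B. {-M..M}) = nat (2 * M + 1) ^ card B" using B by (simp add: card_PiE prod_constant)
  then show ?thesis unfolding M_def[symmetric] of_nat_power by (simp add: power_mono[OF side])
qed

lemma card_le_if_fibers_le:
  assumes P: "finite P" and f: "\<And>s. s \<in> S \<Longrightarrow> f s \<in> P"
    and fib: "\<And>k. finite {s\<in>S. f s = k} \<and> card {s\<in>S. f s = k} \<le> N"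
  shows "finite S" and "card S \<le> card P * N"
proof -
  have S: "S = (\<Union>k\<in>P. {s\<in>S. f s = k})" using f by auto
  show "finite S" by (subst S) (intro finite_UN_I P conjunct1[OF fib])
  have "card S \<le> (\<Sum>k\<in>P. card {s\<in>S. f s = k})" by (subst S) (rule card_UN_le[OF P])
  also have "\<dots> \<le> card P * N" using sum_bounded_above[of P _ N] fib by simp
  finally show "card S \<le> card P * N" .
qed

text \<open>Cover the ball of radius \<open>R\<close> by the \<open>(2\<lceil>R/\<epsilon>\<rceil> + 1)\<^sup>d\<close> cubes of side \<open>\<epsilon>\<close> of a grid adapted to
  an orthonormal basis; for \<open>d \<epsilon>\<^sup>2 < \<delta>\<close> each cube contains at most one value of \<open>b\<close>.\<close>

lemma card_ball_le_polynomial: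
  fixes b :: "'g \<Rightarrow> 'h::euclidean_space"
  assumes B: "finite B" "pairwise orthogonal B" "\<And>e. e \<in> B \<Longrightarrow> norm e = 1"
    and b: "\<And>s. b s \<in> span B"
    and fibers: "\<And>s0. finite {s. b s = b s0} \<and> card {s. b s = b s0} \<le> N"
    and \<delta>: "\<delta> > 0" and gap: "\<And>s t. b s \<noteq> b t \<Longrightarrow> \<delta> \<le> (norm (b s - b t))\<^sup>2"
  obtains c where "c > 0"
    and "\<And>R. R \<ge> 0 \<Longrightarrow> finite {s. norm (b s) \<le> R} \<and> real (card {s. norm (b s) \<le> R}) \<le> c * (1 + R) ^ card B"
proof
  define d where "d = card B"
  define \<epsilon> where "\<epsilon> = sqrt (\<delta> / (real d + 1))"
  have \<epsilon>: "\<epsilon> > 0" "real d * \<epsilon>\<^sup>2 < \<delta>" using \<delta> by (auto simp: \<epsilon>_def field_simps)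
  define cell where "cell v = restrict (\<lambda>e. \<lfloor>(v \<bullet> e) / \<epsilon>\<rfloor>) B" for v
  have cell_inj: "b s = b t" if eq: "cell (b s) = cell (b t)" for s t
  proof (rule ccontr)
    assume "b s \<noteq> b t"
    moreover have "\<lfloor>(b s \<bullet> e) / \<epsilon>\<rfloor> = \<lfloor>(b t \<bullet> e) / \<epsilon>\<rfloor>" if "e \<in> B" for e
      using fun_cong[OF eq, of e] that by (simp add: cell_def)
    then have "(norm (b s - b t))\<^sup>2 \<le> real d * \<epsilon>\<^sup>2"
      using power2_norm_diff_le_if_same_cell[OF B(2,3) b[of s] b[of t] \<epsilon>(1)] by (simp add: d_def)
    ultimately show False using gap \<epsilon> by fastforce
  qed
  show "real (N + 1) * (2 / \<epsilon> + 3) ^ d > 0" using \<epsilon> by (simp add: add_pos_pos)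
  fix R :: real assume R: "R \<ge> 0"
  define S where "S = {s. norm (b s) \<le> R}"
  define P where "P = (\<Pi>\<^sub>E e\<in>B. {-\<lceil>R / \<epsilon>\<rceil>..\<lceil>R / \<epsilon>\<rceil>})"
  have cellP: "cell (b s) \<in> P" if "s \<in> S" for s
    unfolding cell_def P_def restrict_PiE_iff
  proof
    fix e assume "e \<in> B"
    then have "\<bar>b s \<bullet> e\<bar> \<le> R" using that Cauchy_Schwarz_ineq2[of "b s" e] B(3) by (simp add: S_def)
    then show "\<lfloor>(b s \<bullet> e) / \<epsilon>\<rfloor> \<in> {-\<lceil>R / \<epsilon>\<rceil>..\<lceil>R / \<epsilon>\<rceil>}" by (rule floor_divide_in_box[OF _ \<epsilon>(1)])
  qed
  have fib: "finite {s\<in>S. cell (b s) = k} \<and> card {s\<in>S. cell (b s) = k} \<le> N" for k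
  proof (cases "{s\<in>S. cell (b s) = k} = {}")
    case False
    then obtain s0 where "s0 \<in> S" "cell (b s0) = k" by blast
    then have "{s\<in>S. cell (b s) = k} \<subseteq> {s. b s = b s0}" using cell_inj by auto
    then show ?thesis using fibers[of s0] by (meson card_mono order_trans finite_subset)
  next
    case True
    then show ?thesis by (simp only: True) simp
  qed
  have "finite P" unfolding P_def using B(1) by (simp add: finite_PiE)
  note S = card_le_if_fibers_le[OF this cellP fib]
  have "real (card S) \<le> real (card P) * real N" using S(2) by (metis of_nat_le_iff of_nat_mult)
  also have "\<dots> \<le> ((2 / \<epsilon> + 3) * (1 + R)) ^ d * real (N + 1)"
    using card_box_le[OF B(1) R \<epsilon>(1)] R \<epsilon> unfolding P_def d_def by (intro mult_mono) auto
  also have "\<dots> = real (N + 1) * (2 / \<epsilon> + 3) ^ d * (1 + R) ^ card B"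
    by (simp add: power_mult_distrib d_def mult_ac)
  finally show "finite {s. norm (b s) \<le> R} \<and> real (card {s. norm (b s) \<le> R})
      \<le> real (N + 1) * (2 / \<epsilon> + 3) ^ d * (1 + R) ^ card B"
    using S(1) by (simp add: S_def)
qed

lemma cocycle_fiber_subset:
  fixes b :: "'g::group_add \<Rightarrow> 'h::real_vector" and act :: "'g \<Rightarrow> 'h \<Rightarrow> 'h"
  assumes cocycle: "\<And>s t. b (s + t) = b s + act s (b t)" and b0: "b 0 = 0"
  shows "{s. b s = b s0} \<subseteq> (\<lambda>k. s0 + k) ` {s. b s = 0}"
proof
  fix s assume "s \<in> {s. b s = b s0}"
  then have "b (- s0 + s) = b (- s0) + act (- s0) (b s0)" by (simp add: cocycle)
  also have "\<dots> = b (- s0 + s0)" by (rule cocycle[symmetric])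
  finally have "- s0 + s \<in> {s. b s = 0}" by (simp add: b0)
  moreover have "s = s0 + (- s0 + s)" by (simp add: add.assoc[symmetric])
  ultimately show "s \<in> (\<lambda>k. s0 + k) ` {s. b s = 0}" by blast
qed

lemma cocycle_gaussian_sum_le:
  fixes b :: "'g::group_add \<Rightarrow> 'h::euclidean_space" and act :: "'g \<Rightarrow> 'h \<Rightarrow> 'h"
  assumes H: "subspace H" and b_H: "\<And>s. b s \<in> H"
    and cocycle: "\<And>s t. b (s + t) = b s + act s (b t)" and b0: "b 0 = 0"
    and zeros: "finite {s. b s = 0}"
    and \<delta>: "\<delta> > 0" "\<And>s t. b s \<noteq> b t \<Longrightarrow> \<delta> \<le> (norm (b s - b t))\<^sup>2"
  shows "\<exists>C>0. \<forall>t. 0 < t \<and> t \<le> 1 \<longrightarrow>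
      (\<lambda>s. exp (- t * (norm (b s))\<^sup>2)) summable_on UNIV
      \<and> infsum (\<lambda>s. exp (- t * (norm (b s))\<^sup>2)) UNIV \<le> C / t powr (real (dim H) / 2)"
proof -
  have fibers: "finite {s. b s = b s0} \<and> card {s. b s = b s0} \<le> card {s. b s = 0}" for s0
  proof -
    have sub: "{s. b s = b s0} \<subseteq> (\<lambda>k. s0 + k) ` {s. b s = 0}"
      by (rule cocycle_fiber_subset[OF cocycle b0])
    have "card {s. b s = b s0} \<le> card ((\<lambda>k. s0 + k) ` {s. b s = 0})"
      by (rule card_mono[OF finite_imageI[OF zeros] sub])
    also have "\<dots> \<le> card {s. b s = 0}" by (rule card_image_le[OF zeros])
    finally show ?thesis using finite_subset[OF sub finite_imageI[OF zeros]] by simp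
  qed
  obtain B where B: "pairwise orthogonal B" "\<And>x. x \<in> B \<Longrightarrow> norm x = 1"
    "card B = dim H" "span B = H"
    using orthonormal_basis_subspace[OF H] by metis
  have b_span: "b s \<in> span B" for s using b_H B(4) by simp
  obtain c where "c > 0" and count: "\<And>R. R \<ge> 0 \<Longrightarrow> finite {s. norm (b s) \<le> R}
      \<and> real (card {s. norm (b s) \<le> R}) \<le> c * (1 + R) ^ card B"
    using card_ball_le_polynomial[OF pairwise_orthogonal_imp_finite[OF B(1)] B(1,2) b_span fibers \<delta>]
    by blast
  obtain C where "C > 0" and gauss: "\<And>t. 0 < t \<Longrightarrow> t \<le> 1 \<Longrightarrow>
      (\<lambda>s. exp (- t * (norm (b s))\<^sup>2)) summable_on UNIV
      \<and> infsum (\<lambda>s. exp (- t * (norm (b s))\<^sup>2)) UNIV \<le> C / t powr (real (card B) / 2)"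
    by (rule gaussian_sum_le[of "\<lambda>s. norm (b s)", OF _ \<open>c > 0\<close> count]) auto
  then show ?thesis using \<open>C > 0\<close> by (intro exI[of _ C]) (simp add: B(3))
qed

theorem mainTheorem7:
  fixes psi :: "'g::group_add \<Rightarrow> real"
    and H :: "'h::euclidean_space set"
    and pi :: "'g \<Rightarrow> 'h \<Rightarrow> 'h"
    and b :: "'g \<Rightarrow> 'h"
  assumes cnd: "cond_neg_def psi"
    and psi_e: "psi 0 = 0"
    and H: "subspace H"
    and pi_orth: "\<And>s. orth_on H (pi s)"
    and pi_hom: "\<And>s t x. x \<in> H \<Longrightarrow> pi (s + t) x = pi s (pi t x)"
    and b_H: "\<And>s. b s \<in> H"
    and cocycle: "\<And>s t. b (s + t) = b s + pi s (b t)"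
    and psi_b: "\<And>s. psi s = (norm (b s))\<^sup>2"
    and fin_zero: "finite {s. psi s = 0}"
    and gap: "\<exists>\<delta>>0. \<forall>s t. b s \<noteq> b t \<longrightarrow> \<delta> \<le> (norm (b s - b t))\<^sup>2"
  shows "\<exists>C>0. \<forall>t. 0 < t \<and> t \<le> 1 \<longrightarrow>
           (\<forall>n (X :: nat \<Rightarrow> nat \<Rightarrow> 'g op). (\<forall>i<n. \<forall>j<n. X i j \<in> VN) \<longrightarrow>
              mat_norm n (\<lambda>i j. fourier_mult psi t (X i j))
                \<le> C / t powr (real (dim H) / 2) * L1_mat_norm n X)"
proof -
  obtain \<delta> where \<delta>: "\<delta> > 0" "\<And>s t. b s \<noteq> b t \<Longrightarrow> \<delta> \<le> (norm (b s - b t))\<^sup>2" using gap by blast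
  have b0: "b 0 = 0" using psi_e psi_b[of 0] by simp
  have zeros: "finite {s. b s = 0}" using fin_zero by (simp add: psi_b)
  obtain C where "C > 0" and heat: "\<forall>t. 0 < t \<and> t \<le> 1 \<longrightarrow>
      (\<lambda>s. exp (- t * psi s)) summable_on UNIV
      \<and> infsum (\<lambda>s. exp (- t * psi s)) UNIV \<le> C / t powr (real (dim H) / 2)"
    using cocycle_gaussian_sum_le[OF H b_H cocycle b0 zeros \<delta>] by (auto simp: psi_b)
  show ?thesis
  proof (intro exI[of _ C] conjI allI impI \<open>C > 0\<close>)
    fix t :: real and n :: nat and X :: "nat \<Rightarrow> nat \<Rightarrow> 'g op"
    assume t: "0 < t \<and> t \<le> 1" and "\<forall>i<n. \<forall>j<n. X i j \<in> VN"
    then have X: "X i j \<in> VN" if "i < n" "j < n" for i j using that by blast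
    have "mat_norm n (\<lambda>i j. fourier_mult psi t (X i j))
        \<le> infsum (\<lambda>s. exp (- t * psi s)) UNIV * L1_mat_norm n X"
      using heat t by (intro mat_norm_fourier_mult_le X) auto
    also have "\<dots> \<le> C / t powr (real (dim H) / 2) * L1_mat_norm n X"
      using heat t L1_mat_norm_nonneg[OF X] by (intro mult_right_mono) auto
    finally show "mat_norm n (\<lambda>i j. fourier_mult psi t (X i j))
        \<le> C / t powr (real (dim H) / 2) * L1_mat_norm n X" .
  qed
qed

end
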